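(* Let $n$ and $0<n_1<\cdots<n_d<n$ be integers with $m_1=n_1$, $m_k=n_k-n_{k-1}$ ($2\le k\le d$), $m_{d+1}=n-n_d$, and regard $\mathrm{Flag}(n_1,\dots,n_d;n)=\{(VJ_1V^{\mathsf T},\dots,VJ_{d+1}V^{\mathsf T}):V\in\mathrm{O}(n)\}$ as a submanifold of $(\mathbb{R}^{n\times n})^{d+1}$ with the Frobenius inner product. Let $V(t)$ be a differentiable curve in $\mathrm{O}(n)$ with $\Lambda(t)=V(t)^{\mathsf T}\dot V(t)$, $\Lambda(k,k)\equiv0$ ($k=1,\dots,d+1$), $c(t)=V(t)(J_1,\dots,J_{d+1})V(t)^{\mathsf T}$, and let $X(t)\in\mathfrak{so}(n)$ be differentiable with $X(k,k)\equiv0$. Define \begin{align*} T_1(t)&=V(t)\big(\dot XJ_k-J_k\dot X\big)_{k=1}^{d+1}V(t)^{\mathsf T},\\ T_2(t)&=V(t)\big(\Lambda XJ_k+J_kX\Lambda\big)_{k=1}^{d+1}V(t)^{\mathsf T},\\ T_3(t)&=V(t)\big(\Lambda J_kX+XJ_k\Lambda\big)_{k=1}^{d+1}V(t)^{\mathsf T}. \end{align*} Then (1) $T_1(t)\in\mathbb{T}_{c(t)}\mathrm{Flag}(n_1,\dots,n_d;n)$; (2) the orthogonal projection of $T_2(t)$ onto $\mathbb{T}_{c(t)}\mathrm{Flag}(n_1,\dots,n_d;n)$ is $V(t)(W_1(t),\dots,W_{d+1}(t))V(t)^{\mathsf T}$, where \[ W_k(p,q)=\begin{cases}\sum_{s=1}^{d+1}X(k,s)\Lambda(s,q)-\sum_{s=1}^{d+1}\Lambda(s,k)^{\mathsf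 T}X(q,s)^{\mathsf T}, & p=k,\ q\neq k,\\[2pt] \sum_{s=1}^{d+1}\Lambda(s,p)^{\mathsf T}X(k,s)^{\mathsf T}-\sum_{s=1}^{d+1}X(p,s)\Lambda(s,k), & q=k,\ p\neq k,\\[2pt] 0, & \text{otherwise};\end{cases} \] (3) the orthogonal projection of $T_3(t)$ onto $\mathbb{T}_{c(t)}\mathrm{Flag}(n_1,\dots,n_d;n)$ is zero.
   Context: $J_k=\operatorname{diag}(-I_{m_1},\dots,-I_{m_{k-1}},I_{m_k},-I_{m_{k+1}},\dots,-I_{m_{d+1}})$ for $k=1,\dots,d+1$. $V(M_k)_{k=1}^{d+1}V^{\mathsf T}$ denotes $(VM_1V^{\mathsf T},\dots,VM_{d+1}V^{\mathsf T})$. For an $n\times n$ matrix $M$, $M(p,q)$ denotes its $(p,q)$ block in the partition $n=m_1+\cdots+m_{d+1}$. *)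

theory Defs
  imports Complex_Main "Jordan_Normal_Form.Matrix"
begin

text \<open>Block partition n = m_1 + ... + m_(d+1) given by 0 < ns 1 < ... < ns d < n.\<close>

definition bd :: "nat \<Rightarrow> nat \<Rightarrow> (nat \<Rightarrow> nat) \<Rightarrow> nat \<Rightarrow> nat" where
  "bd n d ns k = (if k = 0 then 0 else if k \<le> d then ns k else n)"

definition blk :: "nat \<Rightarrow> nat \<Rightarrow> (nat \<Rightarrow> nat) \<Rightarrow> nat \<Rightarrow> nat set" where
  "blk n d ns k = {bd n d ns (k - 1) ..< bd n d ns k}"

definition bsize :: "nat \<Rightarrow> nat \<Rightarrow> (nat \<Rightarrow> nat) \<Rightarrow> nat \<Rightarrow> nat" where
  "bsize n d ns k = bd n d ns k - bd n d ns (k - 1)"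

definition bof :: "nat \<Rightarrow> nat \<Rightarrow> (nat \<Rightarrow> nat) \<Rightarrow> nat \<Rightarrow> nat" where
  "bof n d ns i = (THE k. k \<in> {1..Suc d} \<and> i \<in> blk n d ns k)"

definition blockm :: "nat \<Rightarrow> nat \<Rightarrow> (nat \<Rightarrow> nat) \<Rightarrow> real mat \<Rightarrow> nat \<Rightarrow> nat \<Rightarrow> real mat" where
  "blockm n d ns M p q = mat (bsize n d ns p) (bsize n d ns q)
      (\<lambda>(a, b). M $$ (bd n d ns (p - 1) + a, bd n d ns (q - 1) + b))"

definition bsum :: "nat \<Rightarrow> nat \<Rightarrow> (nat \<Rightarrow> real mat) \<Rightarrow> nat set \<Rightarrow> real mat" where
  "bsum r c f S = mat r c (\<lambda>(a, b). \<Sum>s\<in>S. f s $$ (a, b))"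

definition assemble :: "nat \<Rightarrow> nat \<Rightarrow> (nat \<Rightarrow> nat) \<Rightarrow> (nat \<Rightarrow> nat \<Rightarrow> real mat) \<Rightarrow> real mat" where
  "assemble n d ns B = mat n n (\<lambda>(i, j).
      B (bof n d ns i) (bof n d ns j) $$
        (i - bd n d ns (bof n d ns i - 1), j - bd n d ns (bof n d ns j - 1)))"

definition Jmat :: "nat \<Rightarrow> nat \<Rightarrow> (nat \<Rightarrow> nat) \<Rightarrow> nat \<Rightarrow> real mat" where
  "Jmat n d ns k = mat n n (\<lambda>(i, j). if i = j then (if i \<in> blk n d ns k then 1 else -1) else 0)"

definition orthogonal_group :: "nat \<Rightarrow> real mat set" where
  "orthogonal_group n = {V \<in> carrier_mat n n. V\<^sup>T * V = 1\<^sub>m n}"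

definition skew_mats :: "nat \<Rightarrow> real mat set" where
  "skew_mats n = {X \<in> carrier_mat n n. X\<^sup>T = - X}"

text \<open>(d+1)-tuples of n x n matrices, indexed by k = 1..d+1 (components outside are 0).\<close>
definition tup :: "nat \<Rightarrow> nat \<Rightarrow> (nat \<Rightarrow> real mat) \<Rightarrow> nat \<Rightarrow> real mat" where
  "tup n d f = (\<lambda>k. if k \<in> {1..Suc d} then f k else 0\<^sub>m n n)"

definition ambient :: "nat \<Rightarrow> nat \<Rightarrow> (nat \<Rightarrow> real mat) set" where
  "ambient n d = {v. \<forall>k. if k \<in> {1..Suc d} then v k \<in> carrier_mat n n else v k = 0\<^sub>m n n}"

definition frob :: "nat \<Rightarrow> nat \<Rightarrow> (nat \<Rightarrow> real mat) \<Rightarrow> (nat \<Rightarrow> real mat) \<Rightarrow> real" where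
  "frob n d A B = (\<Sum>k\<in>{1..Suc d}. \<Sum>i<n. \<Sum>j<n. A k $$ (i, j) * B k $$ (i, j))"

definition flag :: "nat \<Rightarrow> nat \<Rightarrow> (nat \<Rightarrow> nat) \<Rightarrow> (nat \<Rightarrow> real mat) set" where
  "flag n d ns = {tup n d (\<lambda>k. V * Jmat n d ns k * V\<^sup>T) | V. V \<in> orthogonal_group n}"

definition tangent_space :: "nat \<Rightarrow> nat \<Rightarrow> (nat \<Rightarrow> real mat) set \<Rightarrow> (nat \<Rightarrow> real mat) \<Rightarrow> (nat \<Rightarrow> real mat) set" where
  "tangent_space n d M c = {v \<in> ambient n d. \<exists>\<gamma> e. 0 < e \<and> (\<forall>t. \<bar>t\<bar> < e \<longrightarrow> \<gamma> t \<in> M) \<and> \<gamma> 0 = c \<and>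
      (\<forall>k\<in>{1..Suc d}. \<forall>i<n. \<forall>j<n.
         ((\<lambda>t. \<gamma> t k $$ (i, j)) has_real_derivative (v k $$ (i, j))) (at 0))}"

definition is_orth_proj :: "nat \<Rightarrow> nat \<Rightarrow> (nat \<Rightarrow> real mat) set \<Rightarrow> (nat \<Rightarrow> real mat) \<Rightarrow> (nat \<Rightarrow> real mat) \<Rightarrow> bool" where
  "is_orth_proj n d S Y Z \<longleftrightarrow> Z \<in> S \<and> (\<forall>U\<in>S. frob n d Y U = frob n d Z U)"

definition mat_deriv :: "nat \<Rightarrow> (real \<Rightarrow> real mat) \<Rightarrow> (real \<Rightarrow> real mat) \<Rightarrow> bool" where
  "mat_deriv n A A' \<longleftrightarrow> (\<forall>t. A' t \<in> carrier_mat n n \<and>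
      (\<forall>i<n. \<forall>j<n. ((\<lambda>s. A s $$ (i, j)) has_real_derivative (A' t $$ (i, j))) (at t)))"

definition Wblk :: "nat \<Rightarrow> nat \<Rightarrow> (nat \<Rightarrow> nat) \<Rightarrow> real mat \<Rightarrow> real mat \<Rightarrow> nat \<Rightarrow> nat \<Rightarrow> nat \<Rightarrow> real mat" where
  "Wblk n d ns X L k p q =
    (let r = bsize n d ns p; c = bsize n d ns q; B = blockm n d ns in
     if p = k \<and> q \<noteq> k then
       bsum r c (\<lambda>s. B X k s * B L s q) {1..Suc d}
       - bsum r c (\<lambda>s. (B L s k)\<^sup>T * (B X q s)\<^sup>T) {1..Suc d}
     else if q = k \<and> p \<noteq> k then
       bsum r c (\<lambda>s. (B L s p)\<^sup>T * (B X k s)\<^sup>T) {1..Suc d}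
       - bsum r c (\<lambda>s. B X p s * B L s k) {1..Suc d}
     else 0\<^sub>m r c)"

end

(*
  Pull everything back by V = V(t) and write D_k = V^T u_k V for a tangent vector u at
  c = V (J_k) V^T.  Differentiating the relations c_k c_k = 1 and (c_k + 1)(c_l + 1) = 0 (k /= l)
  that hold on the flag manifold gives two constraints: D_k(a, b) = 0 whenever a and b lie on
  the same side of J_k, and D_k(a, b) + D_l(a, b) = 0 for a in block k and b in block l.
  Conversely, for every skew Omega the tuple V (Omega J_k - J_k Omega) V^T is tangent, being the
  velocity of V G(s) (J_k) (V G(s))^T for a curve G in O(n) with G(0) = 1 and G'(0) = Omega, built
  as a product of Givens rotations.

  (1) is the case Omega = X'.  For (2), W_k = Omega J_k - J_k Omega with Omega = (Lambda X - X Lambda)/2,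
  and this agrees with Lambda X J_k + J_k X Lambda on every entry not killed by the first
  constraint.  For (3), since X and Lambda have zero diagonal blocks, the (a, b) entry of
  Lambda J_k X + X J_k Lambda with a in block p and b in block q /= p is the same for k = p and
  k = q, so its pairing with a tangent vector vanishes by the second constraint.
*)

theory Submission
  imports Defs "Jordan_Normal_Form.Determinant"
begin

lemma square_mat_closed:
  "A \<in> carrier_mat n n \<Longrightarrow> B \<in> carrier_mat n n \<Longrightarrow> A * B \<in> carrier_mat n n"
  "A \<in> carrier_mat n n \<Longrightarrow> B \<in> carrier_mat n n \<Longrightarrow> A + B \<in> carrier_mat n n"
  "A \<in> carrier_mat n n \<Longrightarrow> B \<in> carrier_mat n n \<Longrightarrow> A - B \<in> carrier_mat n n"
  "A \<in> carrier_mat n n \<Longrightarrow> - A \<in> carrier_mat n n"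
  by auto

lemma square_mat_assoc:
  "A \<in> carrier_mat n n \<Longrightarrow> B \<in> carrier_mat n n \<Longrightarrow> C \<in> carrier_mat n n \<Longrightarrow> A * B * C = A * (B * C)"
  by (rule assoc_mult_mat) auto

lemma square_mat_distrib:
  fixes A B C :: "real mat"
  shows "A \<in> carrier_mat n n \<Longrightarrow> B \<in> carrier_mat n n \<Longrightarrow> C \<in> carrier_mat n n \<Longrightarrow> A * (B - C) = A * B - A * C"
    "A \<in> carrier_mat n n \<Longrightarrow> B \<in> carrier_mat n n \<Longrightarrow> C \<in> carrier_mat n n \<Longrightarrow> (A - B) * C = A * C - B * C"
    "A \<in> carrier_mat n n \<Longrightarrow> B \<in> carrier_mat n n \<Longrightarrow> C \<in> carrier_mat n n \<Longrightarrow> A * (B + C) = A * B + A * C"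
    "A \<in> carrier_mat n n \<Longrightarrow> B \<in> carrier_mat n n \<Longrightarrow> C \<in> carrier_mat n n \<Longrightarrow> (A + B) * C = A * C + B * C"
    "A \<in> carrier_mat n n \<Longrightarrow> B \<in> carrier_mat n n \<Longrightarrow> (- A) * B = - (A * B)"
    "A \<in> carrier_mat n n \<Longrightarrow> B \<in> carrier_mat n n \<Longrightarrow> A * (- B) = - (A * B)"
    "A \<in> carrier_mat n n \<Longrightarrow> B \<in> carrier_mat n n \<Longrightarrow> A + - B = A - B"
    "A \<in> carrier_mat n n \<Longrightarrow> 1\<^sub>m n * A = A"
    "A \<in> carrier_mat n n \<Longrightarrow> A * 1\<^sub>m n = A"
    "A \<in> carrier_mat n n \<Longrightarrow> B \<in> carrier_mat n n \<Longrightarrow> (A * B)\<^sup>T = B\<^sup>T * A\<^sup>T"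
  by (auto simp: mult_minus_distrib_mat minus_mult_distrib_mat mult_add_distrib_mat add_mult_distrib_mat
      transpose_mult add_uminus_minus_mat)

lemmas square_mat_simps = square_mat_closed square_mat_assoc square_mat_distrib

lemma mat_mult_entry_sum:
  "A \<in> carrier_mat n n \<Longrightarrow> B \<in> carrier_mat n n \<Longrightarrow> i < n \<Longrightarrow> j < n \<Longrightarrow>
    (A * B) $$ (i, j) = (\<Sum>c<n. A $$ (i, c) * B $$ (c, j))"
  by (simp add: scalar_prod_def lessThan_atLeast0)

lemma mat_mult3_entry_sum:
  assumes "A \<in> carrier_mat n n" "B \<in> carrier_mat n n" "C \<in> carrier_mat n n" "i < n" "j < n"
  shows "(A * B * C) $$ (i, j) = (\<Sum>a<n. \<Sum>b<n. A $$ (i, a) * B $$ (a, b) * C $$ (b, j))"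
proof -
  have "(A * B * C) $$ (i, j) = (\<Sum>b<n. (A * B) $$ (i, b) * C $$ (b, j))"
    by (rule mat_mult_entry_sum) (use assms in auto)
  also have "\<dots> = (\<Sum>b<n. \<Sum>a<n. A $$ (i, a) * B $$ (a, b) * C $$ (b, j))"
  proof (rule sum.cong[OF refl])
    fix b assume "b \<in> {..<n}"
    then have "(A * B) $$ (i, b) = (\<Sum>a<n. A $$ (i, a) * B $$ (a, b))"
      by (intro mat_mult_entry_sum) (use assms in auto)
    then show "(A * B) $$ (i, b) * C $$ (b, j) = (\<Sum>a<n. A $$ (i, a) * B $$ (a, b) * C $$ (b, j))"
      by (simp add: sum_distrib_right)
  qed
  also have "\<dots> = (\<Sum>a<n. \<Sum>b<n. A $$ (i, a) * B $$ (a, b) * C $$ (b, j))"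
    by (rule sum.swap)
  finally show ?thesis .
qed

lemma skew_mats_entry:
  assumes "X \<in> skew_mats n" "a < n" "b < n"
  shows "X $$ (b, a) = - X $$ (a, b)"
proof -
  have X: "X \<in> carrier_mat n n" "X\<^sup>T = - X" using assms(1) by (auto simp: skew_mats_def)
  have "X $$ (b, a) = X\<^sup>T $$ (a, b)" using assms X(1) by simp
  also have "\<dots> = - X $$ (a, b)" using assms X by simp
  finally show ?thesis .
qed

lemma skew_matsI:
  assumes "X \<in> carrier_mat n n" "\<And>a b. a < n \<Longrightarrow> b < n \<Longrightarrow> X $$ (b, a) = - X $$ (a, b)"
  shows "X \<in> skew_mats n"
proof -
  have "X\<^sup>T = - X"
  proof (rule eq_matI)
    fix i j assume "i < dim_row (- X)" "j < dim_col (- X)"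
    then have ij: "i < n" "j < n" using assms(1) by auto
    have "X $$ (j, i) = - X $$ (i, j)" by (rule assms(2)[OF ij])
    then show "X\<^sup>T $$ (i, j) = (- X) $$ (i, j)" using ij assms(1) by simp
  qed (use assms(1) in auto)
  then show ?thesis using assms(1) by (simp add: skew_mats_def)
qed

definition mat_inner :: "nat \<Rightarrow> real mat \<Rightarrow> real mat \<Rightarrow> real" where
  "mat_inner n A B = (\<Sum>i<n. \<Sum>j<n. A $$ (i, j) * B $$ (i, j))"

lemma mat_inner_conj:
  assumes V: "V \<in> carrier_mat n n" and M: "M \<in> carrier_mat n n" and U: "U \<in> carrier_mat n n"
  shows "mat_inner n (V * M * V\<^sup>T) U = mat_inner n M (V\<^sup>T * U * V)"
proof -
  define f where "f i j a b = V $$ (i, a) * M $$ (a, b) * V $$ (j, b) * U $$ (i, j)" for i j a b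
  have "mat_inner n (V * M * V\<^sup>T) U = (\<Sum>i<n. \<Sum>j<n. \<Sum>a<n. \<Sum>b<n. f i j a b)"
    unfolding mat_inner_def f_def using assms
    by (intro sum.cong refl, subst mat_mult3_entry_sum) (auto simp: sum_distrib_right carrier_matD[OF V])
  also have "\<dots> = (\<Sum>i<n. \<Sum>a<n. \<Sum>j<n. \<Sum>b<n. f i j a b)"
    by (rule sum.cong[OF refl], rule sum.swap)
  also have "\<dots> = (\<Sum>a<n. \<Sum>i<n. \<Sum>j<n. \<Sum>b<n. f i j a b)"
    by (rule sum.swap)
  also have "\<dots> = (\<Sum>a<n. \<Sum>i<n. \<Sum>b<n. \<Sum>j<n. f i j a b)"
    by (rule sum.cong[OF refl], rule sum.cong[OF refl], rule sum.swap)
  also have "\<dots> = (\<Sum>a<n. \<Sum>b<n. \<Sum>i<n. \<Sum>j<n. f i j a b)"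
    by (rule sum.cong[OF refl], rule sum.swap)
  also have "\<dots> = mat_inner n M (V\<^sup>T * U * V)"
    unfolding mat_inner_def f_def using assms
    by (intro sum.cong refl, subst mat_mult3_entry_sum) (auto simp: sum_distrib_left mult_ac carrier_matD[OF V])
  finally show ?thesis .
qed

lemma frob_tup_conj:
  assumes V: "V \<in> carrier_mat n n" and M: "\<And>k. k \<in> {1..Suc d} \<Longrightarrow> M k \<in> carrier_mat n n"
    and U: "\<And>k. k \<in> {1..Suc d} \<Longrightarrow> U k \<in> carrier_mat n n"
  shows "frob n d (tup n d (\<lambda>k. V * M k * V\<^sup>T)) U = (\<Sum>k\<in>{1..Suc d}. mat_inner n (M k) (V\<^sup>T * U k * V))"
  unfolding frob_def
proof (rule sum.cong[OF refl])
  fix k assume k: "k \<in> {1..Suc d}"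
  have "(\<Sum>i<n. \<Sum>j<n. tup n d (\<lambda>k. V * M k * V\<^sup>T) k $$ (i, j) * U k $$ (i, j))
      = mat_inner n (V * M k * V\<^sup>T) (U k)"
    using k by (simp add: tup_def mat_inner_def)
  also have "\<dots> = mat_inner n (M k) (V\<^sup>T * U k * V)" by (rule mat_inner_conj) (use V M U k in auto)
  finally show "(\<Sum>i<n. \<Sum>j<n. tup n d (\<lambda>k. V * M k * V\<^sup>T) k $$ (i, j) * U k $$ (i, j))
      = mat_inner n (M k) (V\<^sup>T * U k * V)" .
qed

definition mat_has_deriv :: "nat \<Rightarrow> (real \<Rightarrow> real mat) \<Rightarrow> real mat \<Rightarrow> real \<Rightarrow> bool" where
  "mat_has_deriv n A A' x \<longleftrightarrow>
    (\<forall>i<n. \<forall>j<n. ((\<lambda>s. A s $$ (i, j)) has_real_derivative A' $$ (i, j)) (at x))"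

lemma mat_deriv_iff: "mat_deriv n A A' \<longleftrightarrow> (\<forall>t. A' t \<in> carrier_mat n n \<and> mat_has_deriv n A (A' t) t)"
  by (auto simp: mat_deriv_def mat_has_deriv_def)

lemma mat_has_deriv_mult:
  assumes A: "\<And>s. A s \<in> carrier_mat n n" and B: "\<And>s. B s \<in> carrier_mat n n"
    and A': "A' \<in> carrier_mat n n" and B': "B' \<in> carrier_mat n n"
    and dA: "mat_has_deriv n A A' x" and dB: "mat_has_deriv n B B' x"
  shows "mat_has_deriv n (\<lambda>s. A s * B s) (A' * B x + A x * B') x"
  unfolding mat_has_deriv_def
proof (intro allI impI)
  fix i j assume ij: "i < n" "j < n"
  have e: "(\<lambda>s. (A s * B s) $$ (i, j)) = (\<lambda>s. \<Sum>c<n. A s $$ (i, c) * B s $$ (c, j))"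
    using mat_mult_entry_sum[OF A B ij] by auto
  have r: "(A' * B x + A x * B') $$ (i, j)
      = (\<Sum>c<n. A' $$ (i, c) * B x $$ (c, j) + A x $$ (i, c) * B' $$ (c, j))"
    using ij A[of x] B[of x] A' B'
    by (simp add: mat_mult_entry_sum[OF A' B[of x] ij] mat_mult_entry_sum[OF A[of x] B' ij] sum.distrib)
  show "((\<lambda>s. (A s * B s) $$ (i, j)) has_real_derivative (A' * B x + A x * B') $$ (i, j)) (at x)"
    unfolding e r
    by (intro DERIV_sum, rule DERIV_cong[OF DERIV_mult])
      (use dA dB ij in \<open>auto simp: mat_has_deriv_def ac_simps\<close>)
qed

lemma mat_has_deriv_const: "mat_has_deriv n (\<lambda>s. M) (0\<^sub>m n n) x"
  by (simp add: mat_has_deriv_def)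

lemma mat_has_deriv_mult_left:
  assumes "\<And>s. A s \<in> carrier_mat n n" "A' \<in> carrier_mat n n" "M \<in> carrier_mat n n"
    and "mat_has_deriv n A A' x"
  shows "mat_has_deriv n (\<lambda>s. M * A s) (M * A') x"
proof -
  have "mat_has_deriv n (\<lambda>s. M * A s) (0\<^sub>m n n * A x + M * A') x"
    by (rule mat_has_deriv_mult) (use assms mat_has_deriv_const in auto)
  then show ?thesis using assms(1)[of x] assms(2,3) by simp
qed

lemma mat_has_deriv_mult_right:
  assumes "\<And>s. A s \<in> carrier_mat n n" "A' \<in> carrier_mat n n" "M \<in> carrier_mat n n"
    and "mat_has_deriv n A A' x"
  shows "mat_has_deriv n (\<lambda>s. A s * M) (A' * M) x"
proof -
  have "mat_has_deriv n (\<lambda>s. A s * M) (A' * M + A x * 0\<^sub>m n n) x"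
    by (rule mat_has_deriv_mult) (use assms mat_has_deriv_const in auto)
  then show ?thesis using assms(1)[of x] assms(2,3) by simp
qed

lemma mat_has_deriv_add_const:
  assumes "\<And>s. A s \<in> carrier_mat n n" "M \<in> carrier_mat n n" "mat_has_deriv n A A' x"
  shows "mat_has_deriv n (\<lambda>s. A s + M) A' x"
proof -
  have "dim_row (A s) = n" "dim_col (A s) = n" for s using assms(1)[of s] by auto
  then show ?thesis using assms unfolding mat_has_deriv_def
    by (auto intro!: DERIV_cong[OF DERIV_add[OF _ DERIV_const]])
qed

lemma mat_has_deriv_transpose:
  assumes "\<And>s. A s \<in> carrier_mat n n" "A' \<in> carrier_mat n n" "mat_has_deriv n A A' x"
  shows "mat_has_deriv n (\<lambda>s. (A s)\<^sup>T) (A'\<^sup>T) x"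
proof -
  have "dim_row (A s) = n" "dim_col (A s) = n" for s using assms(1)[of s] by auto
  then show ?thesis using assms by (auto simp: mat_has_deriv_def)
qed

lemma mat_has_deriv_constant_curve:
  assumes "mat_has_deriv n F F' x" "\<And>s. F s = C" "F' \<in> carrier_mat n n"
  shows "F' = 0\<^sub>m n n"
proof (rule eq_matI)
  fix i j assume "i < dim_row (0\<^sub>m n n :: real mat)" "j < dim_col (0\<^sub>m n n :: real mat)"
  then have ij: "i < n" "j < n" by auto
  have "((\<lambda>s. C $$ (i, j)) has_real_derivative F' $$ (i, j)) (at x)"
    using assms(1,2) ij by (auto simp: mat_has_deriv_def)
  then have "F' $$ (i, j) = 0" by (rule DERIV_unique[OF _ DERIV_const])
  then show "F' $$ (i, j) = 0\<^sub>m n n $$ (i, j)" using ij by simp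
qed (use assms(3) in auto)

lemma skew_mats_deriv:
  assumes X: "\<forall>s. X s \<in> skew_mats n" and dX: "mat_deriv n X X'"
  shows "X' t \<in> skew_mats n"
proof (rule skew_matsI)
  show "X' t \<in> carrier_mat n n" using dX by (simp add: mat_deriv_def)
  fix a b assume ab: "a < n" "b < n"
  have "(\<lambda>s. X s $$ (b, a)) = (\<lambda>s. - X s $$ (a, b))"
    using X ab skew_mats_entry by blast
  moreover have "((\<lambda>s. X s $$ (b, a)) has_real_derivative X' t $$ (b, a)) (at t)"
    using dX ab by (simp add: mat_deriv_def)
  ultimately have "((\<lambda>s. - X s $$ (a, b)) has_real_derivative X' t $$ (b, a)) (at t)"
    by simp
  moreover have "((\<lambda>s. - X s $$ (a, b)) has_real_derivative - X' t $$ (a, b)) (at t)"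
    using dX ab by (intro DERIV_minus) (simp add: mat_deriv_def)
  ultimately show "X' t $$ (b, a) = - X' t $$ (a, b)" by (rule DERIV_unique)
qed

lemma orthogonal_group_cancel_left:
  assumes "V \<in> orthogonal_group n" "X \<in> carrier_mat n n"
  shows "V\<^sup>T * (V * X) = X"
proof -
  have c: "V \<in> carrier_mat n n" "V\<^sup>T * V = 1\<^sub>m n" using assms by (auto simp: orthogonal_group_def)
  have "V\<^sup>T * (V * X) = (V\<^sup>T * V) * X" by (rule assoc_mult_mat[symmetric]) (use c assms in auto)
  then show ?thesis using c assms by simp
qed

lemma orthogonal_group_mult:
  assumes "A \<in> orthogonal_group n" "B \<in> orthogonal_group n"
  shows "A * B \<in> orthogonal_group n"
proof -
  have c: "A \<in> carrier_mat n n" "B \<in> carrier_mat n n" "A\<^sup>T * A = 1\<^sub>m n" "B\<^sup>T * B = 1\<^sub>m n"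
    using assms by (auto simp: orthogonal_group_def)
  have "(A * B)\<^sup>T * (A * B) = B\<^sup>T * (A\<^sup>T * (A * B))"
    using c by (simp add: square_mat_simps)
  also have "A\<^sup>T * (A * B) = B" by (rule orthogonal_group_cancel_left) (use assms c in auto)
  finally show ?thesis using c by (simp add: orthogonal_group_def)
qed

lemma orthogonal_group_transpose:
  assumes "V \<in> orthogonal_group n"
  shows "V\<^sup>T \<in> orthogonal_group n" "V * V\<^sup>T = 1\<^sub>m n"
proof -
  have c: "V \<in> carrier_mat n n" "V\<^sup>T * V = 1\<^sub>m n" using assms by (auto simp: orthogonal_group_def)
  have "V * V\<^sup>T = 1\<^sub>m n" by (rule mat_mult_left_right_inverse[of "V\<^sup>T" n V]) (use c in auto)
  then show "V\<^sup>T \<in> orthogonal_group n" "V * V\<^sup>T = 1\<^sub>m n" using c by (auto simp: orthogonal_group_def)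
qed

lemma orthogonal_body_velocity_skew:
  assumes V: "\<forall>s. V s \<in> orthogonal_group n" and dV: "mat_deriv n V V'"
  shows "(V t)\<^sup>T * V' t \<in> skew_mats n"
proof -
  define S where "S = (V t)\<^sup>T * V' t"
  have Vc: "V s \<in> carrier_mat n n" for s using V by (simp add: orthogonal_group_def)
  have V'c: "V' t \<in> carrier_mat n n" using dV by (simp add: mat_deriv_def)
  have Sc: "S \<in> carrier_mat n n" using Vc[of t] V'c by (simp add: S_def)
  have "mat_has_deriv n (\<lambda>s. (V s)\<^sup>T * V s) ((V' t)\<^sup>T * V t + (V t)\<^sup>T * V' t) t"
    by (rule mat_has_deriv_mult)
      (use Vc V'c dV mat_has_deriv_transpose[of V n "V' t" t] in \<open>auto simp: mat_deriv_iff\<close>)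
  moreover have "(V' t)\<^sup>T * V t = S\<^sup>T"
    using Vc[of t] V'c by (simp add: S_def square_mat_simps)
  ultimately have "mat_has_deriv n (\<lambda>s. (V s)\<^sup>T * V s) (S\<^sup>T + S) t"
    by (simp add: S_def)
  then have z: "S\<^sup>T + S = 0\<^sub>m n n"
    by (rule mat_has_deriv_constant_curve[where C = "1\<^sub>m n"]) (use V Sc in \<open>auto simp: orthogonal_group_def\<close>)
  show ?thesis unfolding S_def[symmetric]
  proof (rule skew_matsI[OF Sc])
    fix a b assume ab: "a < n" "b < n"
    have "(S\<^sup>T + S) $$ (b, a) = S $$ (a, b) + S $$ (b, a)" using ab Sc by simp
    then show "S $$ (b, a) = - S $$ (a, b)" using z ab by simp
  qed
qed

section \<open>Orthogonal curves with prescribed skew velocity\<close>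

definition givens :: "nat \<Rightarrow> nat \<Rightarrow> nat \<Rightarrow> real \<Rightarrow> real mat" where
  "givens n i j \<theta> = (if i = j then 1\<^sub>m n else mat n n (\<lambda>(a, b).
      if a = b then (if a = i \<or> a = j then cos \<theta> else 1)
      else if a = i \<and> b = j then sin \<theta> else if a = j \<and> b = i then - sin \<theta> else 0))"

definition elem_skew :: "nat \<Rightarrow> nat \<Rightarrow> nat \<Rightarrow> real \<Rightarrow> real mat" where
  "elem_skew n i j w = mat n n (\<lambda>(a, b). (if a = i \<and> b = j then w else 0) - (if a = j \<and> b = i then w else 0))"

lemma givens_carrier [simp]: "givens n i j \<theta> \<in> carrier_mat n n"
  by (simp add: givens_def)

lemma elem_skew_carrier [simp]: "elem_skew n i j w \<in> carrier_mat n n"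
  by (simp add: elem_skew_def)

lemma givens_dims [simp]: "dim_row (givens n i j \<theta>) = n" "dim_col (givens n i j \<theta>) = n"
  by (auto simp: givens_def)

lemma givens_0: "givens n i j 0 = 1\<^sub>m n"
  by (auto simp: givens_def)

lemma givens_has_deriv: "mat_has_deriv n (\<lambda>s. givens n i j (s * w)) (elem_skew n i j w) 0"
proof (cases "i = j")
  case True then show ?thesis by (simp add: mat_has_deriv_def givens_def elem_skew_def)
next
  case False
  show ?thesis unfolding mat_has_deriv_def
  proof (intro allI impI)
    fix a b assume ab: "a < n" "b < n"
    have e: "(\<lambda>s. givens n i j (s * w) $$ (a, b)) = (\<lambda>s.
        if a = b then (if a = i \<or> a = j then cos (s * w) else 1)
        else if a = i \<and> b = j then sin (s * w) else if a = j \<and> b = i then - sin (s * w) else 0)"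
      using False ab by (auto simp: givens_def)
    have cos: "((\<lambda>s. cos (s * w)) has_real_derivative 0) (at 0)"
      by (auto intro!: derivative_eq_intros)
    have sin: "((\<lambda>s. sin (s * w)) has_real_derivative w) (at 0)"
      by (auto intro!: derivative_eq_intros)
    have msin: "((\<lambda>s. - sin (s * w)) has_real_derivative - w) (at 0)"
      using sin by (rule DERIV_minus)
    have E: "elem_skew n i j w $$ (a, b) = (if a = i \<and> b = j then w else 0) - (if a = j \<and> b = i then w else 0)"
      using ab by (simp add: elem_skew_def)
    consider "a = b" "a = i \<or> a = j" | "a = b" "a \<noteq> i" "a \<noteq> j" | "a = i" "b = j" | "a = j" "b = i"
      | "a \<noteq> b" "\<not> (a = i \<and> b = j)" "\<not> (a = j \<and> b = i)"
      by blast
    then show "((\<lambda>s. givens n i j (s * w) $$ (a, b)) has_real_derivative elem_skew n i j w $$ (a, b)) (at 0)"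
      unfolding e E using False by cases (auto simp: cos sin msin)
  qed
qed

lemma givens_orthogonal:
  assumes "i < n" "j < n"
  shows "givens n i j \<theta> \<in> orthogonal_group n"
proof (cases "i = j")
  case True then show ?thesis by (simp add: givens_def orthogonal_group_def)
next
  case False
  let ?R = "givens n i j \<theta>"
  have R: "?R $$ (c, a) = (if c = a then (if a = i \<or> a = j then cos \<theta> else 1)
      else if c = i \<and> a = j then sin \<theta> else if c = j \<and> a = i then - sin \<theta> else 0)"
    if "c < n" "a < n" for c a
    using that False by (simp add: givens_def)
  have "(?R\<^sup>T * ?R) $$ (a, b) = 1\<^sub>m n $$ (a, b)" if ab: "a < n" "b < n" for a b
  proof -
    have "(?R\<^sup>T * ?R) $$ (a, b) = (\<Sum>c<n. ?R $$ (c, a) * ?R $$ (c, b))"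
      using ab by (subst mat_mult_entry_sum[of _ n]) auto
    also have "\<dots> = (\<Sum>c\<in>{i, j}. ?R $$ (c, a) * ?R $$ (c, b))
        + (\<Sum>c\<in>{..<n} - {i, j}. ?R $$ (c, a) * ?R $$ (c, b))"
      using assms by (subst sum.subset_diff[of "{i, j}"]) auto
    also have "(\<Sum>c\<in>{..<n} - {i, j}. ?R $$ (c, a) * ?R $$ (c, b))
        = (\<Sum>c\<in>{..<n} - {i, j}. if c = a \<and> c = b then 1 else 0)"
      using ab by (intro sum.cong) (auto simp: R)
    also have "\<dots> = (if a = b \<and> a \<notin> {i, j} then 1 else 0)"
      using ab by (cases "a = b") (auto simp: sum.delta' intro!: sum.neutral split: if_splits)
    also have "(\<Sum>c\<in>{i, j}. ?R $$ (c, a) * ?R $$ (c, b)) = ?R $$ (i, a) * ?R $$ (i, b) + ?R $$ (j, a) * ?R $$ (j, b)"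
      using False by simp
    finally have e: "(?R\<^sup>T * ?R) $$ (a, b)
        = ?R $$ (i, a) * ?R $$ (i, b) + ?R $$ (j, a) * ?R $$ (j, b) + (if a = b \<and> a \<notin> {i, j} then 1 else 0)" .
    consider "a = i" "b = i" | "a = i" "b = j" | "a = j" "b = i" | "a = j" "b = j" | "a \<notin> {i, j}" | "b \<notin> {i, j}"
      by blast
    moreover have "sin \<theta> * sin \<theta> + cos \<theta> * cos \<theta> = 1" by (simp add: add.commute)
    ultimately show ?thesis unfolding e using ab assms False by cases (auto simp: R)
  qed
  then show ?thesis unfolding orthogonal_group_def by (auto intro!: eq_matI)
qed

definition givens_prod :: "nat \<Rightarrow> (nat \<Rightarrow> nat \<Rightarrow> real) \<Rightarrow> (nat \<times> nat) list \<Rightarrow> real \<Rightarrow> real mat" where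
  "givens_prod n w ps s = foldr (\<lambda>(i, j) M. givens n i j (s * w i j) * M) ps (1\<^sub>m n)"

definition elem_skew_sum :: "nat \<Rightarrow> (nat \<Rightarrow> nat \<Rightarrow> real) \<Rightarrow> (nat \<times> nat) list \<Rightarrow> real mat" where
  "elem_skew_sum n w ps = foldr (\<lambda>(i, j) M. elem_skew n i j (w i j) + M) ps (0\<^sub>m n n)"

lemma elem_skew_sum_carrier [simp]: "elem_skew_sum n w ps \<in> carrier_mat n n"
  by (induction ps) (auto simp: elem_skew_sum_def split: prod.splits)

lemma elem_skew_sum_entry:
  "a < n \<Longrightarrow> b < n \<Longrightarrow> elem_skew_sum n w ps $$ (a, b) =
    sum_list (map (\<lambda>p. (if p = (a, b) then w a b else 0) - (if p = (b, a) then w b a else 0)) ps)"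
proof (induction ps)
  case Nil then show ?case by (simp add: elem_skew_sum_def)
next
  case (Cons p ps)
  obtain i j where p: "p = (i, j)" by (cases p) auto
  have "elem_skew_sum n w (p # ps) = elem_skew n i j (w i j) + elem_skew_sum n w ps"
    by (simp add: elem_skew_sum_def p)
  then have "elem_skew_sum n w (p # ps) $$ (a, b) = elem_skew n i j (w i j) $$ (a, b) + elem_skew_sum n w ps $$ (a, b)"
    using Cons.prems carrier_matD[OF elem_skew_sum_carrier[of n w ps]] by simp
  also have "elem_skew n i j (w i j) $$ (a, b)
      = (if p = (a, b) then w a b else 0) - (if p = (b, a) then w b a else 0)"
    using Cons.prems unfolding p elem_skew_def
    by (cases "a = i"; cases "b = j"; cases "a = j"; cases "b = i") simp_all
  also note Cons.IH[OF Cons.prems]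
  finally show ?case by simp
qed

lemma givens_prod_curve:
  assumes "\<forall>(i, j)\<in>set ps. i < n \<and> j < n"
  shows "(\<forall>s. givens_prod n w ps s \<in> orthogonal_group n) \<and> givens_prod n w ps 0 = 1\<^sub>m n
    \<and> mat_has_deriv n (givens_prod n w ps) (elem_skew_sum n w ps) 0"
  using assms
proof (induction ps)
  case Nil then show ?case
    by (simp add: givens_prod_def elem_skew_sum_def orthogonal_group_def mat_has_deriv_def)
next
  case (Cons p ps)
  obtain i j where p: "p = (i, j)" by (cases p) auto
  have ij: "i < n" "j < n" using Cons.prems p by auto
  have IH: "\<forall>s. givens_prod n w ps s \<in> orthogonal_group n" "givens_prod n w ps 0 = 1\<^sub>m n"
    "mat_has_deriv n (givens_prod n w ps) (elem_skew_sum n w ps) 0"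
    using Cons by auto
  have G: "givens_prod n w (p # ps) = (\<lambda>s. givens n i j (s * w i j) * givens_prod n w ps s)"
    by (intro ext) (simp add: givens_prod_def p)
  have D: "elem_skew_sum n w (p # ps) = elem_skew n i j (w i j) + elem_skew_sum n w ps"
    by (simp add: elem_skew_sum_def p)
  have Gc: "givens_prod n w ps s \<in> carrier_mat n n" for s using IH by (auto simp: orthogonal_group_def)
  have "mat_has_deriv n (\<lambda>s. givens n i j (s * w i j) * givens_prod n w ps s)
      (elem_skew n i j (w i j) * givens_prod n w ps 0 + givens n i j (0 * w i j) * elem_skew_sum n w ps) 0"
    by (rule mat_has_deriv_mult) (use IH Gc givens_has_deriv in auto)
  then have "mat_has_deriv n (givens_prod n w (p # ps)) (elem_skew_sum n w (p # ps)) 0"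
    unfolding G D
    by (simp add: IH(2) givens_0 right_mult_one_mat[OF elem_skew_carrier] left_mult_one_mat[OF elem_skew_sum_carrier])
  moreover have "givens_prod n w (p # ps) s \<in> orthogonal_group n" for s
    unfolding G by (rule orthogonal_group_mult[OF givens_orthogonal[OF ij]]) (use IH in blast)
  moreover have "givens_prod n w (p # ps) 0 = 1\<^sub>m n" unfolding G by (simp add: IH(2) givens_0)
  ultimately show ?case by blast
qed

text \<open>Each unordered pair \<open>{i, j}\<close> occurs twice in \<open>ps\<close>, hence the factor \<open>1/2\<close> in \<open>w\<close>.\<close>

lemma skew_orthogonal_curve:
  assumes \<Omega>: "\<Omega> \<in> skew_mats n"
  shows "\<exists>G. (\<forall>s. G s \<in> orthogonal_group n) \<and> G 0 = 1\<^sub>m n \<and> mat_has_deriv n G \<Omega> 0"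
proof -
  define w where "w i j = \<Omega> $$ (i, j) / 2" for i j
  define ps where "ps = List.product [0..<n] [0..<n]"
  have P: "\<forall>(i, j)\<in>set ps. i < n \<and> j < n" by (auto simp: ps_def)
  have "elem_skew_sum n w ps = \<Omega>"
  proof (rule eq_matI)
    fix a b assume "a < dim_row \<Omega>" "b < dim_col \<Omega>"
    then have ab: "a < n" "b < n" using \<Omega> by (auto simp: skew_mats_def)
    have ab_ps: "(a, b) \<in> set ps" "(b, a) \<in> set ps" using ab by (auto simp: ps_def)
    have "elem_skew_sum n w ps $$ (a, b) =
        sum_list (map (\<lambda>p. (if p = (a, b) then w a b else 0) - (if p = (b, a) then w b a else 0)) ps)"
      by (rule elem_skew_sum_entry[OF ab])
    also have "\<dots> = (\<Sum>p\<in>set ps. (if p = (a, b) then w a b else 0) - (if p = (b, a) then w b a else 0))"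
      by (rule sum_list_distinct_conv_sum_set) (simp add: ps_def distinct_product)
    also have "\<dots> = w a b - w b a"
      using ab_ps by (simp add: sum_subtractf sum.delta')
    also have "\<dots> = \<Omega> $$ (a, b)" using skew_mats_entry[OF \<Omega> ab] by (simp add: w_def)
    finally show "elem_skew_sum n w ps $$ (a, b) = \<Omega> $$ (a, b)" .
  qed (use \<Omega> carrier_matD[OF elem_skew_sum_carrier] in \<open>auto simp: skew_mats_def\<close>)
  then show ?thesis using givens_prod_curve[OF P] by (intro exI[of _ "givens_prod n w ps"]) auto
qed

locale flag_partition =
  fixes n d :: nat and ns :: "nat \<Rightarrow> nat"
  assumes ns_mono: "\<forall>k\<in>{1..<d}. ns k < ns (Suc k)"
    and ns_last: "ns d < n"
begin

abbreviation "BD \<equiv> bd n d ns"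
abbreviation "BLK \<equiv> blk n d ns"
abbreviation "BOF \<equiv> bof n d ns"
abbreviation "BSZ \<equiv> bsize n d ns"
abbreviation "J \<equiv> Jmat n d ns"

lemmas square_simps = square_mat_simps[where n = n]

lemma ns_mono_le:
  assumes "1 \<le> k" "k \<le> l" "l \<le> d"
  shows "ns k \<le> ns l"
  using assms(2,3)
proof (induction l rule: dec_induct)
  case base then show ?case by simp
next
  case (step m)
  then have "m \<in> {1..<d}" using assms(1) by auto
  then have "ns m < ns (Suc m)" using ns_mono by blast
  then show ?case using step by simp
qed

lemma bd_mono: "k \<le> l \<Longrightarrow> BD k \<le> BD l"
  using ns_mono_le[of k l] ns_mono_le[of k d] ns_last by (auto simp: bd_def)

lemma bd_0 [simp]: "BD 0 = 0"
  by (simp add: bd_def)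

lemma bd_Suc_d [simp]: "BD (Suc d) = n"
  by (simp add: bd_def)

lemma bd_le: "BD k \<le> n"
  using bd_mono[of k "Suc (Suc d) + k"] by (simp add: bd_def)

lemma blk_subset: "BLK k \<subseteq> {..<n}"
  using bd_le[of k] by (auto simp: blk_def)

lemma blk_disjoint: "i \<in> BLK k \<Longrightarrow> i \<in> BLK l \<Longrightarrow> k = l"
proof (rule ccontr)
  assume a: "i \<in> BLK k" "i \<in> BLK l" "k \<noteq> l"
  have False if "i \<in> BLK k" "i \<in> BLK l" "k < l" for k l
  proof -
    have "BD k \<le> BD (l - 1)" using \<open>k < l\<close> by (intro bd_mono) simp
    then show False using that by (auto simp: blk_def)
  qed
  with a show False by (metis linorder_neqE_nat)
qed

lemma blk_cover:
  assumes "i < n"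
  shows "\<exists>k\<in>{1..Suc d}. i \<in> BLK k"
proof -
  have ex: "\<exists>k. i < BD k" using assms by (intro exI[of _ "Suc d"]) simp
  define k where "k = (LEAST k. i < BD k)"
  have k1: "i < BD k" unfolding k_def by (rule LeastI_ex[OF ex])
  then have k0: "k \<noteq> 0" by (intro notI) simp
  have "k - 1 < k" using k0 by simp
  then have k2: "\<not> i < BD (k - 1)" unfolding k_def by (rule not_less_Least)
  have k3: "k \<le> Suc d" unfolding k_def using assms by (simp add: Least_le)
  show ?thesis using k0 k1 k2 k3 by (auto simp: blk_def intro!: bexI[of _ k])
qed

lemma bof_blk:
  assumes "i < n"
  shows "BOF i \<in> {1..Suc d}" "i \<in> BLK (BOF i)"
proof -
  obtain k where k: "k \<in> {1..Suc d}" "i \<in> BLK k" using blk_cover[OF assms] by blast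
  have "BOF i = k" unfolding bof_def
    by (rule the_equality) (use k blk_disjoint in auto)
  then show "BOF i \<in> {1..Suc d}" "i \<in> BLK (BOF i)" using k by auto
qed

lemma bof_eq: "i \<in> BLK k \<Longrightarrow> BOF i = k"
  using bof_blk[of i] blk_disjoint[of i k "BOF i"] blk_subset[of k] by auto

lemma bof_offset: "i < n \<Longrightarrow> i - BD (BOF i - 1) < BSZ (BOF i) \<and> BD (BOF i - 1) + (i - BD (BOF i - 1)) = i"
  using bof_blk[of i] by (auto simp: blk_def bsize_def)

lemma sum_blocks: "(\<Sum>s\<in>{1..Suc d}. \<Sum>c\<in>BLK s. f c) = (\<Sum>c<n. f c)"
proof -
  have "m \<le> Suc d \<Longrightarrow> (\<Sum>s\<in>{1..m}. \<Sum>c\<in>BLK s. f c) = (\<Sum>c\<in>{0..<BD m}. f c)" for m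
  proof (induction m)
    case 0 then show ?case by simp
  next
    case (Suc m)
    have "(\<Sum>s\<in>{1..Suc m}. \<Sum>c\<in>BLK s. f c)
        = (\<Sum>s\<in>{1..m}. \<Sum>c\<in>BLK s. f c) + (\<Sum>c\<in>BLK (Suc m). f c)"
      by simp
    also have "\<dots> = (\<Sum>c\<in>{0..<BD m}. f c) + (\<Sum>c\<in>{BD m..<BD (Suc m)}. f c)"
      using Suc by (simp add: blk_def)
    also have "\<dots> = (\<Sum>c\<in>{0..<BD (Suc m)}. f c)"
      by (rule sum.atLeastLessThan_concat) (auto intro: bd_mono)
    finally show ?case .
  qed
  from this[of "Suc d"] show ?thesis by (simp add: atLeast0LessThan)
qed

lemma sum_blk_shift: "(\<Sum>c<BSZ s. f (BD (s - 1) + c)) = (\<Sum>c\<in>BLK s. f c)"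
proof -
  have le: "BD (s - 1) \<le> BD s" by (rule bd_mono) simp
  have "(\<Sum>c<BSZ s. f (BD (s - 1) + c)) = (\<Sum>c\<in>{0..<BSZ s}. f (c + BD (s - 1)))"
    by (simp add: lessThan_atLeast0 add.commute)
  also have "\<dots> = (\<Sum>c\<in>{0 + BD (s - 1)..<BSZ s + BD (s - 1)}. f c)"
    by (rule sum.shift_bounds_nat_ivl[symmetric])
  also have "\<dots> = (\<Sum>c\<in>BLK s. f c)" using le by (simp add: blk_def bsize_def)
  finally show ?thesis .
qed

definition jsign :: "nat \<Rightarrow> nat \<Rightarrow> real" where
  "jsign k i = (if i \<in> BLK k then 1 else -1)"

lemma jsign_bof: "a < n \<Longrightarrow> jsign k a = (if BOF a = k then 1 else -1)"
  using bof_blk[of a] bof_eq[of a k] by (auto simp: jsign_def)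

lemma Jmat_carrier [simp]: "J k \<in> carrier_mat n n"
  by (simp add: Jmat_def)

lemma Jmat_dims [simp]: "dim_row (J k) = n" "dim_col (J k) = n"
  by (auto simp: Jmat_def)

lemma Jmat_entry: "i < n \<Longrightarrow> j < n \<Longrightarrow> J k $$ (i, j) = (if i = j then jsign k i else 0)"
  by (simp add: Jmat_def jsign_def)

lemma mult_Jmat_entry:
  assumes "M \<in> carrier_mat n n" "i < n" "j < n"
  shows "(M * J k) $$ (i, j) = M $$ (i, j) * jsign k j"
proof -
  have "(M * J k) $$ (i, j) = (\<Sum>c<n. M $$ (i, c) * J k $$ (c, j))"
    by (rule mat_mult_entry_sum) (use assms in auto)
  also have "\<dots> = (\<Sum>c<n. if c = j then M $$ (i, c) * jsign k c else 0)"
    using assms by (intro sum.cong) (auto simp: Jmat_entry)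
  also have "\<dots> = M $$ (i, j) * jsign k j" using assms(3) by (simp add: sum.delta')
  finally show ?thesis .
qed

lemma Jmat_mult_entry:
  assumes "M \<in> carrier_mat n n" "i < n" "j < n"
  shows "(J k * M) $$ (i, j) = jsign k i * M $$ (i, j)"
proof -
  have "(J k * M) $$ (i, j) = (\<Sum>c<n. J k $$ (i, c) * M $$ (c, j))"
    by (rule mat_mult_entry_sum) (use assms in auto)
  also have "\<dots> = (\<Sum>c<n. if c = i then jsign k c * M $$ (c, j) else 0)"
    using assms by (intro sum.cong) (auto simp: Jmat_entry)
  also have "\<dots> = jsign k i * M $$ (i, j)" using assms(2) by (simp add: sum.delta')
  finally show ?thesis .
qed

lemma mult_Jmat_mult_entry:
  assumes "A \<in> carrier_mat n n" "B \<in> carrier_mat n n" "a < n" "b < n"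
  shows "(A * J k * B) $$ (a, b) = (\<Sum>c<n. jsign k c * (A $$ (a, c) * B $$ (c, b)))"
proof -
  have "(A * J k * B) $$ (a, b) = (\<Sum>c<n. (A * J k) $$ (a, c) * B $$ (c, b))"
    by (rule mat_mult_entry_sum) (use assms in auto)
  also have "\<dots> = (\<Sum>c<n. jsign k c * (A $$ (a, c) * B $$ (c, b)))"
  proof (rule sum.cong[OF refl])
    fix c assume "c \<in> {..<n}"
    then have "(A * J k) $$ (a, c) = A $$ (a, c) * jsign k c" by (intro mult_Jmat_entry) (use assms in auto)
    then show "(A * J k) $$ (a, c) * B $$ (c, b) = jsign k c * (A $$ (a, c) * B $$ (c, b))" by simp
  qed
  finally show ?thesis .
qed

lemma Jmat_square: "J k * J k = 1\<^sub>m n"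
proof (rule eq_matI)
  fix i j assume "i < dim_row (1\<^sub>m n :: real mat)" "j < dim_col (1\<^sub>m n :: real mat)"
  then have ij: "i < n" "j < n" by auto
  have "(J k * J k) $$ (i, j) = J k $$ (i, j) * jsign k j" by (rule mult_Jmat_entry) (use ij in auto)
  then show "(J k * J k) $$ (i, j) = 1\<^sub>m n $$ (i, j)" using ij by (auto simp: Jmat_entry jsign_def)
qed auto

lemma Jmat_plus_one_mult:
  assumes "k \<noteq> l"
  shows "(J k + 1\<^sub>m n) * (J l + 1\<^sub>m n) = 0\<^sub>m n n"
proof (rule eq_matI)
  fix i j assume "i < dim_row (0\<^sub>m n n :: real mat)" "j < dim_col (0\<^sub>m n n :: real mat)"
  then have ij: "i < n" "j < n" by auto
  have "(J k + 1\<^sub>m n) * (J l + 1\<^sub>m n) = (J k + 1\<^sub>m n) * J l + (J k + 1\<^sub>m n)"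
    by (simp add: mult_add_distrib_mat[of "J k + 1\<^sub>m n" n n "J l" n "1\<^sub>m n"])
  moreover have "((J k + 1\<^sub>m n) * J l) $$ (i, j) = (J k + 1\<^sub>m n) $$ (i, j) * jsign l j"
    by (rule mult_Jmat_entry) (use ij in auto)
  moreover have "\<not> (i \<in> BLK k \<and> i \<in> BLK l)" using blk_disjoint assms by blast
  ultimately show "((J k + 1\<^sub>m n) * (J l + 1\<^sub>m n)) $$ (i, j) = 0\<^sub>m n n $$ (i, j)"
    using ij by (auto simp: Jmat_entry jsign_def)
qed auto

lemma flag_relations:
  assumes Q: "Q \<in> orthogonal_group n"
  shows "(Q * J k * Q\<^sup>T) * (Q * J k * Q\<^sup>T) = 1\<^sub>m n"
    and "k \<noteq> l \<Longrightarrow> (Q * J k * Q\<^sup>T + 1\<^sub>m n) * (Q * J l * Q\<^sup>T + 1\<^sub>m n) = 0\<^sub>m n n"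
proof -
  have Qc: "Q \<in> carrier_mat n n" using Q by (simp add: orthogonal_group_def)
  have QQ: "Q * Q\<^sup>T = 1\<^sub>m n" using orthogonal_group_transpose[OF Q] by simp
  have QtQ: "Q\<^sup>T * (Q * X) = X" if "X \<in> carrier_mat n n" for X
    by (rule orthogonal_group_cancel_left[OF Q that])
  have "(Q * J k * Q\<^sup>T) * (Q * J k * Q\<^sup>T) = Q * (J k * J k) * Q\<^sup>T"
    using Qc by (simp add: square_simps QtQ)
  also have "\<dots> = 1\<^sub>m n" using Qc QQ by (simp add: Jmat_square)
  finally show "(Q * J k * Q\<^sup>T) * (Q * J k * Q\<^sup>T) = 1\<^sub>m n" .
  assume kl: "k \<noteq> l"
  have e: "Q * J m * Q\<^sup>T + 1\<^sub>m n = Q * (J m + 1\<^sub>m n) * Q\<^sup>T" for m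
    using Qc by (simp add: square_simps QQ)
  have "(Q * J k * Q\<^sup>T + 1\<^sub>m n) * (Q * J l * Q\<^sup>T + 1\<^sub>m n) = Q * ((J k + 1\<^sub>m n) * (J l + 1\<^sub>m n)) * Q\<^sup>T"
    unfolding e using Qc by (simp add: square_simps QtQ)
  also have "\<dots> = 0\<^sub>m n n" using Qc by (simp add: Jmat_plus_one_mult[OF kl])
  finally show "(Q * J k * Q\<^sup>T + 1\<^sub>m n) * (Q * J l * Q\<^sup>T + 1\<^sub>m n) = 0\<^sub>m n n" .
qed

section \<open>Tangent spaces of the flag manifold\<close>

abbreviation "flag_point V \<equiv> tup n d (\<lambda>k. V * J k * V\<^sup>T)"
abbreviation "flag_tangent V \<equiv> tangent_space n d (flag n d ns) (flag_point V)"

lemma flag_point_in_flag: "V \<in> orthogonal_group n \<Longrightarrow> flag_point V \<in> flag n d ns"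
  unfolding flag_def by blast

lemma zero_in_flag_tangent:
  assumes "V \<in> orthogonal_group n"
  shows "tup n d (\<lambda>k. 0\<^sub>m n n) \<in> flag_tangent V"
proof -
  have "tup n d (\<lambda>k. 0\<^sub>m n n) \<in> ambient n d" by (simp add: ambient_def tup_def)
  then show ?thesis unfolding tangent_space_def using flag_point_in_flag[OF assms]
    by (auto intro!: exI[of _ "\<lambda>s. flag_point V"] exI[of _ 1] simp: tup_def)
qed

lemma commutator_in_flag_tangent:
  assumes V: "V \<in> orthogonal_group n" and \<Omega>: "\<Omega> \<in> skew_mats n"
  shows "tup n d (\<lambda>k. V * (\<Omega> * J k - J k * \<Omega>) * V\<^sup>T) \<in> flag_tangent V"
proof -
  obtain G where G: "\<forall>s. G s \<in> orthogonal_group n" "G 0 = 1\<^sub>m n" "mat_has_deriv n G \<Omega> 0"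
    using skew_orthogonal_curve[OF \<Omega>] by blast
  have Vc: "V \<in> carrier_mat n n" using V by (simp add: orthogonal_group_def square_simps)
  have \<Omega>c: "\<Omega> \<in> carrier_mat n n" "\<Omega>\<^sup>T = - \<Omega>" using \<Omega> by (auto simp: skew_mats_def)
  have Gc: "G s \<in> carrier_mat n n" for s using G by (simp add: orthogonal_group_def)
  define \<gamma> where "\<gamma> s = flag_point (V * G s)" for s
  have "mat_has_deriv n (\<lambda>s. (V * G s) * J k * (V * G s)\<^sup>T) (V * (\<Omega> * J k - J k * \<Omega>) * V\<^sup>T) 0" for k
  proof -
    have d1: "mat_has_deriv n (\<lambda>s. V * G s) (V * \<Omega>) 0"
      by (rule mat_has_deriv_mult_left) (use Gc \<Omega>c Vc G in auto)
    have d2: "mat_has_deriv n (\<lambda>s. V * G s * J k) (V * \<Omega> * J k) 0"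
      by (rule mat_has_deriv_mult_right) (use Gc \<Omega>c Vc d1 in auto)
    have d3: "mat_has_deriv n (\<lambda>s. (V * G s)\<^sup>T) ((V * \<Omega>)\<^sup>T) 0"
      by (rule mat_has_deriv_transpose) (use Gc \<Omega>c Vc d1 in auto)
    have "mat_has_deriv n (\<lambda>s. V * G s * J k * (V * G s)\<^sup>T)
        (V * \<Omega> * J k * (V * G 0)\<^sup>T + V * G 0 * J k * (V * \<Omega>)\<^sup>T) 0"
      by (rule mat_has_deriv_mult) (use Gc \<Omega>c Vc d2 d3 in auto)
    moreover have "V * \<Omega> * J k * (V * G 0)\<^sup>T + V * G 0 * J k * (V * \<Omega>)\<^sup>T = V * (\<Omega> * J k - J k * \<Omega>) * V\<^sup>T"
      using Vc \<Omega>c by (simp add: G(2) square_simps)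
    ultimately show ?thesis by simp
  qed
  note deriv = this
  show ?thesis unfolding tangent_space_def
  proof (intro CollectI conjI exI[of _ \<gamma>] exI[of _ "1::real"])
    show "tup n d (\<lambda>k. V * (\<Omega> * J k - J k * \<Omega>) * V\<^sup>T) \<in> ambient n d"
      unfolding ambient_def tup_def using Vc \<Omega>c by auto
    show "\<forall>t. \<bar>t\<bar> < 1 \<longrightarrow> \<gamma> t \<in> flag n d ns"
      unfolding \<gamma>_def using flag_point_in_flag orthogonal_group_mult[OF V] G(1) by blast
    show "\<gamma> 0 = flag_point V" unfolding \<gamma>_def G(2) using Vc by simp
    show "\<forall>k\<in>{1..Suc d}. \<forall>i<n. \<forall>j<n. ((\<lambda>s. \<gamma> s k $$ (i, j)) has_real_derivative
        tup n d (\<lambda>k. V * (\<Omega> * J k - J k * \<Omega>) * V\<^sup>T) k $$ (i, j)) (at 0)"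
      using deriv unfolding \<gamma>_def tup_def mat_has_deriv_def by auto
  qed simp
qed

lemma flag_tangent_carrier:
  "u \<in> flag_tangent V \<Longrightarrow> k \<in> {1..Suc d} \<Longrightarrow> u k \<in> carrier_mat n n"
  unfolding tangent_space_def ambient_def by (metis (no_types, lifting) mem_Collect_eq)

text \<open>The curve in the definition of the tangent space only lies in the flag manifold for
  \<open>|s| < e\<close>; it is frozen outside so that \<open>Q\<close> is defined everywhere.\<close>

lemma flag_tangent_curve:
  assumes V: "V \<in> orthogonal_group n" and u: "u \<in> flag_tangent V"
  obtains Q where "\<And>s. Q s \<in> orthogonal_group n"
    and "\<And>k. k \<in> {1..Suc d} \<Longrightarrow> Q 0 * J k * (Q 0)\<^sup>T = J k"
    and "\<And>k. k \<in> {1..Suc d} \<Longrightarrow> mat_has_deriv n (\<lambda>s. Q s * J k * (Q s)\<^sup>T) (V\<^sup>T * u k * V) 0"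
proof -
  have Vc: "V \<in> carrier_mat n n" using V by (simp add: orthogonal_group_def square_simps)
  obtain \<gamma> e where e: "0 < e" and \<gamma>_flag: "\<forall>t. \<bar>t\<bar> < e \<longrightarrow> \<gamma> t \<in> flag n d ns"
    and \<gamma>_0: "\<gamma> 0 = flag_point V"
    and \<gamma>_deriv: "\<forall>k\<in>{1..Suc d}. \<forall>i<n. \<forall>j<n.
      ((\<lambda>t. \<gamma> t k $$ (i, j)) has_real_derivative (u k $$ (i, j))) (at 0)"
    using u unfolding tangent_space_def by blast
  define \<gamma>' where "\<gamma>' s = (if \<bar>s\<bar> < e then \<gamma> s else flag_point V)" for s
  have "\<gamma>' s \<in> flag n d ns" for s using \<gamma>_flag flag_point_in_flag[OF V] by (simp add: \<gamma>'_def)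
  then have "\<forall>s. \<exists>W. W \<in> orthogonal_group n \<and> \<gamma>' s = flag_point W" unfolding flag_def by blast
  then obtain W where W: "\<And>s. W s \<in> orthogonal_group n" "\<And>s. \<gamma>' s = flag_point (W s)" by metis
  define Q where "Q s = V\<^sup>T * W s" for s
  have Wc: "W s \<in> carrier_mat n n" for s using W(1) by (simp add: orthogonal_group_def)
  have Q_orth: "Q s \<in> orthogonal_group n" for s
    unfolding Q_def by (rule orthogonal_group_mult[OF orthogonal_group_transpose(1)[OF V] W(1)])
  have pull: "V\<^sup>T * \<gamma>' s k * V = Q s * J k * (Q s)\<^sup>T" if k: "k \<in> {1..Suc d}" for s k
    using k W(2)[of s] Wc[of s] Vc by (simp add: tup_def Q_def square_simps)
  have "Q 0 * J k * (Q 0)\<^sup>T = J k" if k: "k \<in> {1..Suc d}" for k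
  proof -
    have "\<gamma>' 0 k = V * J k * V\<^sup>T" using e k by (simp add: \<gamma>'_def \<gamma>_0 tup_def)
    then have "V\<^sup>T * \<gamma>' 0 k * V = V\<^sup>T * (V * (J k * (V\<^sup>T * V)))" using Vc by (simp add: square_simps)
    also have "\<dots> = J k" using V by (simp add: orthogonal_group_cancel_left[OF V] orthogonal_group_def)
    finally show ?thesis using pull[OF k] by simp
  qed
  moreover have "mat_has_deriv n (\<lambda>s. Q s * J k * (Q s)\<^sup>T) (V\<^sup>T * u k * V) 0" if k: "k \<in> {1..Suc d}" for k
  proof -
    have uc: "u k \<in> carrier_mat n n" by (rule flag_tangent_carrier[OF u k])
    have \<gamma>'c: "\<gamma>' s k \<in> carrier_mat n n" for s using k W(2)[of s] Wc[of s] by (simp add: tup_def square_simps)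
    have "mat_has_deriv n (\<lambda>s. \<gamma>' s k) (u k) 0"
      unfolding mat_has_deriv_def
    proof (intro allI impI)
      fix i j assume ij: "i < n" "j < n"
      show "((\<lambda>s. \<gamma>' s k $$ (i, j)) has_real_derivative u k $$ (i, j)) (at 0)"
        by (rule has_field_derivative_transform_within_open[of "\<lambda>t. \<gamma> t k $$ (i, j)" _ _ "{-e<..<e}"])
          (use \<gamma>_deriv k ij e in \<open>auto simp: \<gamma>'_def\<close>)
    qed
    then have "mat_has_deriv n (\<lambda>s. V\<^sup>T * \<gamma>' s k) (V\<^sup>T * u k) 0"
      by (rule mat_has_deriv_mult_left[rotated 3]) (use \<gamma>'c uc Vc in auto)
    then have "mat_has_deriv n (\<lambda>s. V\<^sup>T * \<gamma>' s k * V) (V\<^sup>T * u k * V) 0"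
      by (rule mat_has_deriv_mult_right[rotated 3]) (use \<gamma>'c uc Vc in auto)
    then show ?thesis using pull[OF k] by simp
  qed
  ultimately show ?thesis using that Q_orth by blast
qed

lemma flag_tangent_anticommutes:
  assumes V: "V \<in> orthogonal_group n" and u: "u \<in> flag_tangent V" and k: "k \<in> {1..Suc d}"
  shows "V\<^sup>T * u k * V * J k + J k * (V\<^sup>T * u k * V) = 0\<^sub>m n n"
proof -
  obtain Q where Q: "\<And>s. Q s \<in> orthogonal_group n"
    "\<And>k. k \<in> {1..Suc d} \<Longrightarrow> Q 0 * J k * (Q 0)\<^sup>T = J k"
    "\<And>k. k \<in> {1..Suc d} \<Longrightarrow> mat_has_deriv n (\<lambda>s. Q s * J k * (Q s)\<^sup>T) (V\<^sup>T * u k * V) 0"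
    by (rule flag_tangent_curve[OF V u]) blast
  define D where "D = V\<^sup>T * u k * V"
  have Dc: "D \<in> carrier_mat n n"
    using flag_tangent_carrier[OF u k] V by (simp add: D_def orthogonal_group_def square_simps)
  have Pc: "Q s * J k * (Q s)\<^sup>T \<in> carrier_mat n n" for s
    using Q(1)[of s] by (simp add: orthogonal_group_def square_simps)
  have "mat_has_deriv n (\<lambda>s. (Q s * J k * (Q s)\<^sup>T) * (Q s * J k * (Q s)\<^sup>T)) (D * J k + J k * D) 0"
    using mat_has_deriv_mult[OF Pc Pc Dc Dc Q(3)[OF k, folded D_def] Q(3)[OF k, folded D_def]]
    by (simp add: Q(2)[OF k])
  then have "D * J k + J k * D = 0\<^sub>m n n"
    by (rule mat_has_deriv_constant_curve[where C = "1\<^sub>m n"]) (use flag_relations(1)[OF Q(1)] Dc in auto)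
  then show ?thesis by (simp add: D_def)
qed

lemma flag_tangent_cross:
  assumes V: "V \<in> orthogonal_group n" and u: "u \<in> flag_tangent V"
    and k: "k \<in> {1..Suc d}" and l: "l \<in> {1..Suc d}" and kl: "k \<noteq> l"
  shows "V\<^sup>T * u k * V * (J l + 1\<^sub>m n) + (J k + 1\<^sub>m n) * (V\<^sup>T * u l * V) = 0\<^sub>m n n"
proof -
  obtain Q where Q: "\<And>s. Q s \<in> orthogonal_group n"
    "\<And>k. k \<in> {1..Suc d} \<Longrightarrow> Q 0 * J k * (Q 0)\<^sup>T = J k"
    "\<And>k. k \<in> {1..Suc d} \<Longrightarrow> mat_has_deriv n (\<lambda>s. Q s * J k * (Q s)\<^sup>T) (V\<^sup>T * u k * V) 0"
    by (rule flag_tangent_curve[OF V u]) blast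
  define P where "P m s = Q s * J m * (Q s)\<^sup>T + 1\<^sub>m n" for m s
  have Pc: "P m s \<in> carrier_mat n n" for m s using Q(1)[of s] by (simp add: P_def orthogonal_group_def)
  have Dc: "V\<^sup>T * u m * V \<in> carrier_mat n n" if "m \<in> {1..Suc d}" for m
    using flag_tangent_carrier[OF u that] V by (simp add: orthogonal_group_def square_simps)
  have dP: "mat_has_deriv n (P m) (V\<^sup>T * u m * V) 0" if m: "m \<in> {1..Suc d}" for m
    unfolding P_def by (rule mat_has_deriv_add_const) (use Q(1,3) m in \<open>auto simp: orthogonal_group_def square_simps\<close>)
  have "mat_has_deriv n (\<lambda>s. P k s * P l s)
      (V\<^sup>T * u k * V * P l 0 + P k 0 * (V\<^sup>T * u l * V)) 0"
    by (rule mat_has_deriv_mult[OF Pc Pc Dc[OF k] Dc[OF l] dP[OF k] dP[OF l]])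
  moreover have "V\<^sup>T * u k * V * P l 0 + P k 0 * (V\<^sup>T * u l * V) \<in> carrier_mat n n"
    using Dc[OF k] Dc[OF l] Pc[of k 0] Pc[of l 0] by (simp add: square_simps)
  ultimately have "V\<^sup>T * u k * V * P l 0 + P k 0 * (V\<^sup>T * u l * V) = 0\<^sub>m n n"
    using mat_has_deriv_constant_curve[where C = "0\<^sub>m n n"] flag_relations(2)[OF Q(1) kl]
    unfolding P_def by blast
  then show ?thesis using Q(2)[OF k] Q(2)[OF l] by (simp add: P_def)
qed

lemma flag_tangent_entry_same_sign:
  assumes V: "V \<in> orthogonal_group n" and u: "u \<in> flag_tangent V" and k: "k \<in> {1..Suc d}"
    and ab: "a < n" "b < n" "jsign k a = jsign k b"
  shows "(V\<^sup>T * u k * V) $$ (a, b) = 0"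
proof -
  define D where "D = V\<^sup>T * u k * V"
  have Dc: "D \<in> carrier_mat n n"
    using flag_tangent_carrier[OF u k] V by (simp add: D_def orthogonal_group_def square_simps)
  have "(D * J k + J k * D) $$ (a, b) = 0"
    using flag_tangent_anticommutes[OF V u k] ab by (simp add: D_def)
  moreover have "(D * J k + J k * D) $$ (a, b) = (D * J k) $$ (a, b) + (J k * D) $$ (a, b)"
    using ab Dc by simp
  moreover have "(D * J k) $$ (a, b) + (J k * D) $$ (a, b) = D $$ (a, b) * jsign k b + jsign k a * D $$ (a, b)"
    by (simp only: mult_Jmat_entry[OF Dc ab(1,2)] Jmat_mult_entry[OF Dc ab(1,2)])
  moreover have "jsign k a \<noteq> 0" by (simp add: jsign_def)
  ultimately show ?thesis using ab by (simp add: D_def algebra_simps)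
qed

lemma flag_tangent_entry_cross:
  assumes V: "V \<in> orthogonal_group n" and u: "u \<in> flag_tangent V"
    and k: "k \<in> {1..Suc d}" and l: "l \<in> {1..Suc d}" and kl: "k \<noteq> l"
    and a: "a \<in> BLK k" and b: "b \<in> BLK l"
  shows "(V\<^sup>T * u k * V) $$ (a, b) + (V\<^sup>T * u l * V) $$ (a, b) = 0"
proof -
  define D where "D m = V\<^sup>T * u m * V" for m
  have Dc: "D m \<in> carrier_mat n n" if "m \<in> {1..Suc d}" for m
    using flag_tangent_carrier[OF u that] V by (simp add: D_def orthogonal_group_def square_simps)
  have ab: "a < n" "b < n" using a b blk_subset by auto
  have signs: "jsign k a = 1" "jsign l b = 1" using a b by (auto simp: jsign_def)
  have "(D k * (J l + 1\<^sub>m n) + (J k + 1\<^sub>m n) * D l) $$ (a, b) = 0"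
    using flag_tangent_cross[OF V u k l kl] ab by (simp add: D_def)
  moreover have "D k * (J l + 1\<^sub>m n) + (J k + 1\<^sub>m n) * D l = D k * J l + D k + (J k * D l + D l)"
    using Dc[OF k] Dc[OF l] by (simp add: square_simps)
  moreover have "(D k * J l + D k + (J k * D l + D l)) $$ (a, b)
      = (D k * J l) $$ (a, b) + D k $$ (a, b) + ((J k * D l) $$ (a, b) + D l $$ (a, b))"
    using ab Dc[OF k] Dc[OF l] by simp
  moreover have "(D k * J l) $$ (a, b) = D k $$ (a, b) * jsign l b" "(J k * D l) $$ (a, b) = jsign k a * D l $$ (a, b)"
    using ab by (simp_all only: mult_Jmat_entry[OF Dc[OF k]] Jmat_mult_entry[OF Dc[OF l]])
  ultimately show ?thesis using signs by (simp add: D_def)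
qed

lemma bsum_entry: "a < r \<Longrightarrow> b < c \<Longrightarrow> bsum r c f S $$ (a, b) = (\<Sum>s\<in>S. f s $$ (a, b))"
  by (simp add: bsum_def)

lemma bsum_dims [simp]: "dim_row (bsum r c f S) = r" "dim_col (bsum r c f S) = c"
  by (auto simp: bsum_def)

lemma blockm_mult_entry:
  assumes "a < BSZ p" "b < BSZ q"
  shows "(blockm n d ns M p s * blockm n d ns N s q) $$ (a, b)
       = (\<Sum>c\<in>BLK s. M $$ (BD (p - 1) + a, c) * N $$ (c, BD (q - 1) + b))"
proof -
  have "(blockm n d ns M p s * blockm n d ns N s q) $$ (a, b)
      = (\<Sum>c<BSZ s. M $$ (BD (p - 1) + a, BD (s - 1) + c) * N $$ (BD (s - 1) + c, BD (q - 1) + b))"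
    using assms by (simp add: scalar_prod_def blockm_def lessThan_atLeast0)
  also have "\<dots> = (\<Sum>c\<in>BLK s. M $$ (BD (p - 1) + a, c) * N $$ (c, BD (q - 1) + b))"
    by (rule sum_blk_shift)
  finally show ?thesis .
qed

lemma blockm_transpose_mult_entry:
  assumes "a < BSZ p" "b < BSZ q"
  shows "((blockm n d ns N s p)\<^sup>T * (blockm n d ns M q s)\<^sup>T) $$ (a, b)
       = (\<Sum>c\<in>BLK s. N $$ (c, BD (p - 1) + a) * M $$ (BD (q - 1) + b, c))"
proof -
  have "((blockm n d ns N s p)\<^sup>T * (blockm n d ns M q s)\<^sup>T) $$ (a, b)
      = (\<Sum>c<BSZ s. N $$ (BD (s - 1) + c, BD (p - 1) + a) * M $$ (BD (q - 1) + b, BD (s - 1) + c))"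
    using assms by (simp add: scalar_prod_def blockm_def lessThan_atLeast0)
  also have "\<dots> = (\<Sum>c\<in>BLK s. N $$ (c, BD (p - 1) + a) * M $$ (BD (q - 1) + b, c))"
    by (rule sum_blk_shift)
  finally show ?thesis .
qed

lemma assemble_Wblk_entry:
  assumes X: "X \<in> carrier_mat n n" and L: "L \<in> carrier_mat n n" and i: "i < n" and j: "j < n"
  shows "assemble n d ns (Wblk n d ns X L k) $$ (i, j) =
    (if BOF i = k \<and> BOF j \<noteq> k then (X * L) $$ (i, j) - (\<Sum>c<n. L $$ (c, i) * X $$ (j, c))
     else if BOF j = k \<and> BOF i \<noteq> k then (\<Sum>c<n. L $$ (c, i) * X $$ (j, c)) - (X * L) $$ (i, j)
     else 0)"
proof -
  define p where "p = BOF i"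
  define q where "q = BOF j"
  define a where "a = i - BD (p - 1)"
  define b where "b = j - BD (q - 1)"
  have a: "a < BSZ p" "BD (p - 1) + a = i" using bof_offset[OF i] by (auto simp: a_def p_def)
  have b: "b < BSZ q" "BD (q - 1) + b = j" using bof_offset[OF j] by (auto simp: b_def q_def)
  have A: "assemble n d ns (Wblk n d ns X L k) $$ (i, j) = Wblk n d ns X L k p q $$ (a, b)"
    using i j by (simp add: assemble_def p_def q_def a_def b_def)
  have S1: "(\<Sum>s\<in>{1..Suc d}. (blockm n d ns X p s * blockm n d ns L s q) $$ (a, b)) = (X * L) $$ (i, j)"
  proof -
    have "(\<Sum>s\<in>{1..Suc d}. (blockm n d ns X p s * blockm n d ns L s q) $$ (a, b))
        = (\<Sum>s\<in>{1..Suc d}. \<Sum>c\<in>BLK s. X $$ (i, c) * L $$ (c, j))"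
      by (intro sum.cong refl) (simp only: blockm_mult_entry[OF a(1) b(1)] a(2) b(2))
    also have "\<dots> = (\<Sum>c<n. X $$ (i, c) * L $$ (c, j))" by (rule sum_blocks)
    also have "\<dots> = (X * L) $$ (i, j)" by (rule mat_mult_entry_sum[symmetric]) (use X L i j in auto)
    finally show ?thesis .
  qed
  have S2: "(\<Sum>s\<in>{1..Suc d}. ((blockm n d ns L s p)\<^sup>T * (blockm n d ns X q s)\<^sup>T) $$ (a, b))
      = (\<Sum>c<n. L $$ (c, i) * X $$ (j, c))"
  proof -
    have "(\<Sum>s\<in>{1..Suc d}. ((blockm n d ns L s p)\<^sup>T * (blockm n d ns X q s)\<^sup>T) $$ (a, b))
        = (\<Sum>s\<in>{1..Suc d}. \<Sum>c\<in>BLK s. L $$ (c, i) * X $$ (j, c))"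
      by (intro sum.cong refl) (simp only: blockm_transpose_mult_entry[OF a(1) b(1)] a(2) b(2))
    also have "\<dots> = (\<Sum>c<n. L $$ (c, i) * X $$ (j, c))" by (rule sum_blocks)
    finally show ?thesis .
  qed
  show ?thesis
  proof (cases "p = k \<and> q \<noteq> k")
    case True
    then show ?thesis using A a b S1 S2 unfolding Wblk_def Let_def
      by (simp add: bsum_entry p_def[symmetric] q_def[symmetric])
  next
    case F1: False
    show ?thesis
    proof (cases "q = k \<and> p \<noteq> k")
      case True
      then show ?thesis using F1 A a b S1 S2 unfolding Wblk_def Let_def
        by (simp add: bsum_entry p_def[symmetric] q_def[symmetric])
    next
      case False
      then show ?thesis using F1 A a b unfolding Wblk_def Let_def
        by (auto simp: p_def[symmetric] q_def[symmetric])
    qed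
  qed
qed

definition half_commutator :: "real mat \<Rightarrow> real mat \<Rightarrow> real mat" where
  "half_commutator L X = mat n n (\<lambda>(a, b). ((L * X) $$ (a, b) - (X * L) $$ (a, b)) / 2)"

lemma half_commutator_entry:
  "a < n \<Longrightarrow> b < n \<Longrightarrow> half_commutator L X $$ (a, b) = ((L * X) $$ (a, b) - (X * L) $$ (a, b)) / 2"
  by (simp add: half_commutator_def)

lemma commutator_Jmat_entry:
  assumes "\<Omega> \<in> carrier_mat n n" "a < n" "b < n"
  shows "(\<Omega> * J k - J k * \<Omega>) $$ (a, b) = \<Omega> $$ (a, b) * jsign k b - jsign k a * \<Omega> $$ (a, b)"
proof -
  have "(\<Omega> * J k - J k * \<Omega>) $$ (a, b) = (\<Omega> * J k) $$ (a, b) - (J k * \<Omega>) $$ (a, b)"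
    using assms by simp
  also have "\<dots> = \<Omega> $$ (a, b) * jsign k b - jsign k a * \<Omega> $$ (a, b)"
    by (simp only: mult_Jmat_entry[OF assms] Jmat_mult_entry[OF assms])
  finally show ?thesis .
qed

lemma skew_mult_entry_swap:
  assumes X: "X \<in> skew_mats n" and L: "L \<in> skew_mats n" and ab: "a < n" "b < n"
  shows "(L * X) $$ (b, a) = (X * L) $$ (a, b)"
proof -
  have c: "X \<in> carrier_mat n n" "L \<in> carrier_mat n n" using X L by (auto simp: skew_mats_def)
  have "(L * X) $$ (b, a) = (\<Sum>c<n. L $$ (b, c) * X $$ (c, a))" by (rule mat_mult_entry_sum) (use c ab in auto)
  also have "\<dots> = (\<Sum>c<n. X $$ (a, c) * L $$ (c, b))"
  proof (rule sum.cong[OF refl])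
    fix c assume "c \<in> {..<n}"
    then have c: "c < n" by simp
    have "L $$ (b, c) = - L $$ (c, b)" "X $$ (c, a) = - X $$ (a, c)"
      by (rule skew_mats_entry[OF L c ab(2)], rule skew_mats_entry[OF X ab(1) c])
    then show "L $$ (b, c) * X $$ (c, a) = X $$ (a, c) * L $$ (c, b)" by simp
  qed
  also have "\<dots> = (X * L) $$ (a, b)" by (rule mat_mult_entry_sum[symmetric]) (use c ab in auto)
  finally show ?thesis .
qed

lemma half_commutator_skew:
  assumes X: "X \<in> skew_mats n" and L: "L \<in> skew_mats n"
  shows "half_commutator L X \<in> skew_mats n"
proof (rule skew_matsI)
  fix a b assume ab: "a < n" "b < n"
  show "half_commutator L X $$ (b, a) = - half_commutator L X $$ (a, b)"
    using ab skew_mult_entry_swap[OF X L ab] skew_mult_entry_swap[OF L X ab]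
    by (simp add: half_commutator_entry field_simps)
qed (simp add: half_commutator_def)

lemma assemble_Wblk_eq_commutator:
  assumes X: "X \<in> skew_mats n" and L: "L \<in> skew_mats n"
  shows "assemble n d ns (Wblk n d ns X L k)
    = half_commutator L X * J k - J k * half_commutator L X"
proof (rule eq_matI)
  have Xc: "X \<in> carrier_mat n n" and Lc: "L \<in> carrier_mat n n" using X L by (auto simp: skew_mats_def)
  have \<Omega>c: "half_commutator L X \<in> carrier_mat n n" by (simp add: half_commutator_def)
  fix i j assume "i < dim_row (half_commutator L X * J k - J k * half_commutator L X)"
    "j < dim_col (half_commutator L X * J k - J k * half_commutator L X)"
  then have ij: "i < n" "j < n" by (auto simp: half_commutator_def)
  have LX: "(\<Sum>c<n. L $$ (c, i) * X $$ (j, c)) = (L * X) $$ (i, j)"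
  proof -
    have "(\<Sum>c<n. L $$ (c, i) * X $$ (j, c)) = (\<Sum>c<n. L $$ (i, c) * X $$ (c, j))"
    proof (rule sum.cong[OF refl])
      fix c assume "c \<in> {..<n}"
      then have c: "c < n" by simp
      have "L $$ (c, i) = - L $$ (i, c)" "X $$ (j, c) = - X $$ (c, j)"
        by (rule skew_mats_entry[OF L ij(1) c], rule skew_mats_entry[OF X c ij(2)])
      then show "L $$ (c, i) * X $$ (j, c) = L $$ (i, c) * X $$ (c, j)" by simp
    qed
    also have "\<dots> = (L * X) $$ (i, j)" by (rule mat_mult_entry_sum[symmetric]) (use ij Xc Lc in auto)
    finally show ?thesis .
  qed
  show "assemble n d ns (Wblk n d ns X L k) $$ (i, j)
      = (half_commutator L X * J k - J k * half_commutator L X) $$ (i, j)"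
    unfolding commutator_Jmat_entry[OF \<Omega>c ij] assemble_Wblk_entry[OF Xc Lc ij] LX half_commutator_entry[OF ij] jsign_bof[OF ij(1)]
      jsign_bof[OF ij(2)]
    by (cases "BOF i = k"; cases "BOF j = k") (simp_all add: field_simps)
qed (auto simp: assemble_def half_commutator_def)

section \<open>Orthogonal projections onto the tangent space\<close>

lemma anticommutator_entry_eq_commutator:
  assumes X: "X \<in> carrier_mat n n" and L: "L \<in> carrier_mat n n" and ab: "a < n" "b < n"
    and signs: "jsign k a \<noteq> jsign k b"
  shows "(L * X * J k + J k * X * L) $$ (a, b) = (half_commutator L X * J k - J k * half_commutator L X) $$ (a, b)"
proof -
  have \<Omega>c: "half_commutator L X \<in> carrier_mat n n" by (simp add: half_commutator_def)
  have LXc: "L * X \<in> carrier_mat n n" "X * L \<in> carrier_mat n n" using X L by auto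
  have "J k * X * L = J k * (X * L)" using X L by (simp add: square_simps)
  then have "(L * X * J k + J k * X * L) $$ (a, b) = (L * X * J k) $$ (a, b) + (J k * (X * L)) $$ (a, b)"
    using ab X L by simp
  also have "\<dots> = (L * X) $$ (a, b) * jsign k b + jsign k a * (X * L) $$ (a, b)"
    by (simp only: mult_Jmat_entry[OF LXc(1) ab] Jmat_mult_entry[OF LXc(2) ab])
  also have "\<dots> = half_commutator L X $$ (a, b) * jsign k b - jsign k a * half_commutator L X $$ (a, b)"
    using signs by (auto simp: half_commutator_entry[OF ab] jsign_def field_simps)
  also have "\<dots> = (half_commutator L X * J k - J k * half_commutator L X) $$ (a, b)"
    by (rule commutator_Jmat_entry[OF \<Omega>c ab, symmetric])
  finally show ?thesis .
qed

lemma frob_flag_tangent_cong: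
  assumes V: "V \<in> orthogonal_group n" and U: "U \<in> flag_tangent V"
    and M: "\<And>k. M k \<in> carrier_mat n n" and M': "\<And>k. M' k \<in> carrier_mat n n"
    and eq: "\<And>k a b. k \<in> {1..Suc d} \<Longrightarrow> a < n \<Longrightarrow> b < n \<Longrightarrow> jsign k a \<noteq> jsign k b \<Longrightarrow>
      M k $$ (a, b) = M' k $$ (a, b)"
  shows "frob n d (tup n d (\<lambda>k. V * M k * V\<^sup>T)) U = frob n d (tup n d (\<lambda>k. V * M' k * V\<^sup>T)) U"
proof -
  have Vc: "V \<in> carrier_mat n n" using V by (simp add: orthogonal_group_def)
  have Uc: "k \<in> {1..Suc d} \<Longrightarrow> U k \<in> carrier_mat n n" for k by (rule flag_tangent_carrier[OF U])
  have "mat_inner n (M k) (V\<^sup>T * U k * V) = mat_inner n (M' k) (V\<^sup>T * U k * V)" if k: "k \<in> {1..Suc d}" for k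
    unfolding mat_inner_def
  proof (intro sum.cong refl)
    fix a b assume "a \<in> {..<n}" "b \<in> {..<n}"
    then have ab: "a < n" "b < n" by auto
    show "M k $$ (a, b) * (V\<^sup>T * U k * V) $$ (a, b) = M' k $$ (a, b) * (V\<^sup>T * U k * V) $$ (a, b)"
      using eq[OF k ab] flag_tangent_entry_same_sign[OF V U k ab] by (cases "jsign k a = jsign k b") auto
  qed
  then have "(\<Sum>k\<in>{1..Suc d}. mat_inner n (M k) (V\<^sup>T * U k * V))
      = (\<Sum>k\<in>{1..Suc d}. mat_inner n (M' k) (V\<^sup>T * U k * V))"
    by (intro sum.cong) auto
  moreover have "frob n d (tup n d (\<lambda>k. V * M k * V\<^sup>T)) U = (\<Sum>k\<in>{1..Suc d}. mat_inner n (M k) (V\<^sup>T * U k * V))"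
    "frob n d (tup n d (\<lambda>k. V * M' k * V\<^sup>T)) U = (\<Sum>k\<in>{1..Suc d}. mat_inner n (M' k) (V\<^sup>T * U k * V))"
    by (rule frob_tup_conj; use Vc M M' Uc in auto)+
  ultimately show ?thesis by simp
qed

lemma orth_proj_LXJ_JXL:
  assumes V: "V \<in> orthogonal_group n" and X: "X \<in> skew_mats n" and L: "L \<in> skew_mats n"
  shows "is_orth_proj n d (flag_tangent V) (tup n d (\<lambda>k. V * (L * X * J k + J k * X * L) * V\<^sup>T))
    (tup n d (\<lambda>k. V * assemble n d ns (Wblk n d ns X L k) * V\<^sup>T))"
proof -
  define \<Omega> where "\<Omega> = half_commutator L X"
  have \<Omega>: "\<Omega> \<in> skew_mats n" unfolding \<Omega>_def by (rule half_commutator_skew[OF X L])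
  have c: "X \<in> carrier_mat n n" "L \<in> carrier_mat n n" "\<Omega> \<in> carrier_mat n n"
    using X L \<Omega> by (auto simp: skew_mats_def)
  have W: "assemble n d ns (Wblk n d ns X L k) = \<Omega> * J k - J k * \<Omega>" for k
    unfolding \<Omega>_def by (rule assemble_Wblk_eq_commutator[OF X L])
  have "frob n d (tup n d (\<lambda>k. V * (L * X * J k + J k * X * L) * V\<^sup>T)) U
      = frob n d (tup n d (\<lambda>k. V * (\<Omega> * J k - J k * \<Omega>) * V\<^sup>T)) U" if U: "U \<in> flag_tangent V" for U
    by (rule frob_flag_tangent_cong[OF V U]) (use c anticommutator_entry_eq_commutator in \<open>auto simp: \<Omega>_def\<close>)
  then show ?thesis
    unfolding is_orth_proj_def W using commutator_in_flag_tangent[OF V \<Omega>] by simp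
qed

lemma blockm_diag_zero_entry:
  assumes "blockm n d ns M (BOF i) (BOF i) = 0\<^sub>m (BSZ (BOF i)) (BSZ (BOF i))"
    and "i < n" "j < n" "BOF i = BOF j"
  shows "M $$ (i, j) = 0"
proof -
  let ?o = "BD (BOF i - 1)"
  have i: "i - ?o < BSZ (BOF i)" "?o + (i - ?o) = i" using bof_offset[OF assms(2)] by auto
  have j: "j - ?o < BSZ (BOF i)" "?o + (j - ?o) = j" using bof_offset[OF assms(3)] assms(4) by auto
  have "blockm n d ns M (BOF i) (BOF i) $$ (i - ?o, j - ?o) = 0" using assms(1) i j by simp
  then show ?thesis using i j by (simp add: blockm_def)
qed

text \<open>The \<open>(a, b)\<close> entries of \<open>\<Lambda>J\<^sub>kX + XJ\<^sub>k\<Lambda>\<close>, for \<open>a\<close> in block \<open>p\<close> and \<open>b\<close> in block \<open>q \<noteq> p\<close>,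
  only involve the blocks \<open>X(p, s)\<close>, \<open>\<Lambda>(s, q)\<close>, ... with \<open>s \<noteq> p, q\<close>: so they coincide for
  \<open>k = p\<close> and \<open>k = q\<close>, and the tangent constraint \<open>D\<^sub>p(a, b) + D\<^sub>q(a, b) = 0\<close> kills them.\<close>

lemma sum_sandwich_entry_tangent_vanishes:
  assumes X: "X \<in> carrier_mat n n" and L: "L \<in> carrier_mat n n" and ab: "a < n" "b < n"
    and Lz: "\<And>i c. i < n \<Longrightarrow> c < n \<Longrightarrow> BOF i = BOF c \<Longrightarrow> L $$ (i, c) = 0"
    and Xz: "\<And>i c. i < n \<Longrightarrow> c < n \<Longrightarrow> BOF i = BOF c \<Longrightarrow> X $$ (i, c) = 0"
    and D_same: "\<And>k. k \<in> {1..Suc d} \<Longrightarrow> jsign k a = jsign k b \<Longrightarrow> D k = 0"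
    and D_cross: "\<And>k l. k \<in> {1..Suc d} \<Longrightarrow> l \<in> {1..Suc d} \<Longrightarrow> k \<noteq> l \<Longrightarrow> a \<in> BLK k \<Longrightarrow> b \<in> BLK l \<Longrightarrow>
      D k + D l = 0"
  shows "(\<Sum>k\<in>{1..Suc d}. (L * J k * X + X * J k * L) $$ (a, b) * D k) = 0"
proof -
  define g where "g c = L $$ (a, c) * X $$ (c, b) + X $$ (a, c) * L $$ (c, b)" for c
  have M: "(L * J k * X + X * J k * L) $$ (a, b) = (\<Sum>c<n. jsign k c * g c)" for k
  proof -
    have "(L * J k * X + X * J k * L) $$ (a, b) = (L * J k * X) $$ (a, b) + (X * J k * L) $$ (a, b)"
      using ab X L by simp
    also have "\<dots> = (\<Sum>c<n. jsign k c * g c)"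
      unfolding mult_Jmat_mult_entry[OF L X ab] mult_Jmat_mult_entry[OF X L ab] g_def
      by (simp add: sum.distrib algebra_simps)
    finally show ?thesis .
  qed
  define p where "p = BOF a"
  define q where "q = BOF b"
  have pq: "p \<in> {1..Suc d}" "q \<in> {1..Suc d}" "a \<in> BLK p" "b \<in> BLK q"
    using bof_blk ab by (auto simp: p_def q_def)
  show ?thesis
  proof (cases "p = q")
    case True
    have "D k = 0" if "k \<in> {1..Suc d}" for k
      using D_same[OF that] True ab by (simp add: jsign_bof p_def q_def)
    then show ?thesis by simp
  next
    case False
    have "(\<Sum>k\<in>{1..Suc d}. (L * J k * X + X * J k * L) $$ (a, b) * D k)
        = (\<Sum>k\<in>{p, q}. (L * J k * X + X * J k * L) $$ (a, b) * D k)"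
    proof (rule sum.mono_neutral_right)
      show "\<forall>k\<in>{1..Suc d} - {p, q}. (L * J k * X + X * J k * L) $$ (a, b) * D k = 0"
        using D_same ab by (auto simp: jsign_bof p_def q_def)
    qed (use pq in auto)
    also have "\<dots> = (L * J p * X + X * J p * L) $$ (a, b) * (D p + D q)"
    proof -
      have "(\<Sum>c<n. jsign p c * g c) = (\<Sum>c<n. jsign q c * g c)"
      proof (rule sum.cong[OF refl])
        fix c assume c: "c \<in> {..<n}"
        show "jsign p c * g c = jsign q c * g c"
        proof (cases "BOF c = p \<or> BOF c = q")
          case True
          then have "g c = 0" using Lz Xz ab c unfolding g_def p_def q_def by auto
          then show ?thesis by simp
        next
          case False
          then show ?thesis using c by (simp add: jsign_bof)
        qed
      qed
      then show ?thesis using False by (simp add: M algebra_simps)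
    qed
    also have "\<dots> = 0" using D_cross[OF pq(1,2) False pq(3,4)] by simp
    finally show ?thesis .
  qed
qed

lemma orth_proj_LJX_XJL:
  assumes V: "V \<in> orthogonal_group n" and X: "X \<in> carrier_mat n n" and L: "L \<in> carrier_mat n n"
    and X_diag: "\<forall>k\<in>{1..Suc d}. blockm n d ns X k k = 0\<^sub>m (BSZ k) (BSZ k)"
    and L_diag: "\<forall>k\<in>{1..Suc d}. blockm n d ns L k k = 0\<^sub>m (BSZ k) (BSZ k)"
  shows "is_orth_proj n d (flag_tangent V) (tup n d (\<lambda>k. V * (L * J k * X + X * J k * L) * V\<^sup>T))
    (tup n d (\<lambda>k. 0\<^sub>m n n))"
proof -
  have Vc: "V \<in> carrier_mat n n" using V by (simp add: orthogonal_group_def)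
  have Xz: "X $$ (i, c) = 0" and Lz: "L $$ (i, c) = 0" if "i < n" "c < n" "BOF i = BOF c" for i c
    using blockm_diag_zero_entry[OF _ that] X_diag L_diag bof_blk[OF that(1)] by auto
  have "frob n d (tup n d (\<lambda>k. V * (L * J k * X + X * J k * L) * V\<^sup>T)) U = 0" if U: "U \<in> flag_tangent V" for U
  proof -
    define D where "D k = V\<^sup>T * U k * V" for k
    have Uc: "k \<in> {1..Suc d} \<Longrightarrow> U k \<in> carrier_mat n n" for k by (rule flag_tangent_carrier[OF U])
    have "frob n d (tup n d (\<lambda>k. V * (L * J k * X + X * J k * L) * V\<^sup>T)) U
        = (\<Sum>k\<in>{1..Suc d}. \<Sum>a<n. \<Sum>b<n. (L * J k * X + X * J k * L) $$ (a, b) * D k $$ (a, b))"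
      unfolding D_def mat_inner_def[symmetric] by (rule frob_tup_conj) (use Vc X L Uc in auto)
    also have "\<dots> = (\<Sum>a<n. \<Sum>k\<in>{1..Suc d}. \<Sum>b<n. (L * J k * X + X * J k * L) $$ (a, b) * D k $$ (a, b))"
      by (rule sum.swap)
    also have "\<dots> = (\<Sum>a<n. \<Sum>b<n. \<Sum>k\<in>{1..Suc d}. (L * J k * X + X * J k * L) $$ (a, b) * D k $$ (a, b))"
      by (rule sum.cong[OF refl], rule sum.swap)
    also have "\<dots> = 0"
    proof (rule sum.neutral, rule ballI, rule sum.neutral, rule ballI)
      fix a b assume "a \<in> {..<n}" "b \<in> {..<n}"
      then have ab: "a < n" "b < n" by auto
      show "(\<Sum>k\<in>{1..Suc d}. (L * J k * X + X * J k * L) $$ (a, b) * D k $$ (a, b)) = 0"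
        by (rule sum_sandwich_entry_tangent_vanishes[OF X L ab Lz Xz])
          (use flag_tangent_entry_same_sign[OF V U] flag_tangent_entry_cross[OF V U] ab in \<open>auto simp: D_def\<close>)
    qed
    finally show ?thesis .
  qed
  then show ?thesis
    unfolding is_orth_proj_def using zero_in_flag_tangent[OF V] by (simp add: frob_def tup_def)
qed

end

theorem lemmaB1:
  fixes n d :: nat and ns :: "nat \<Rightarrow> nat"
    and V V' X X' :: "real \<Rightarrow> real mat" and t :: real
  assumes d_pos: "1 \<le> d"
    and ns_first: "0 < ns 1"
    and ns_mono: "\<forall>k\<in>{1..<d}. ns k < ns (Suc k)"
    and ns_last: "ns d < n"
    and V_orth: "\<forall>s. V s \<in> orthogonal_group n"
    and V_deriv: "mat_deriv n V V'"
    and Lam_diag: "\<forall>s. \<forall>k\<in>{1..Suc d}. blockm n d ns ((V s)\<^sup>T * V' s) k k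
                     = 0\<^sub>m (bsize n d ns k) (bsize n d ns k)"
    and X_skew: "\<forall>s. X s \<in> skew_mats n"
    and X_deriv: "mat_deriv n X X'"
    and X_diag: "\<forall>s. \<forall>k\<in>{1..Suc d}. blockm n d ns (X s) k k
                     = 0\<^sub>m (bsize n d ns k) (bsize n d ns k)"
  shows "let L = (V t)\<^sup>T * V' t;
             c = tup n d (\<lambda>k. V t * Jmat n d ns k * (V t)\<^sup>T);
             TS = tangent_space n d (flag n d ns) c;
             J = Jmat n d ns;
             T1 = tup n d (\<lambda>k. V t * (X' t * J k - J k * X' t) * (V t)\<^sup>T);
             T2 = tup n d (\<lambda>k. V t * (L * X t * J k + J k * X t * L) * (V t)\<^sup>T);
             T3 = tup n d (\<lambda>k. V t * (L * J k * X t + X t * J k * L) * (V t)\<^sup>T);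
             W = (\<lambda>k. assemble n d ns (Wblk n d ns (X t) L k))
         in T1 \<in> TS
            \<and> is_orth_proj n d TS T2 (tup n d (\<lambda>k. V t * W k * (V t)\<^sup>T))
            \<and> is_orth_proj n d TS T3 (tup n d (\<lambda>k. 0\<^sub>m n n))"
proof -
  interpret flag_partition n d ns using ns_mono ns_last by unfold_locales
  have V: "V t \<in> orthogonal_group n" using V_orth by blast
  have L: "(V t)\<^sup>T * V' t \<in> skew_mats n" by (rule orthogonal_body_velocity_skew[OF V_orth V_deriv])
  have X: "X t \<in> skew_mats n" using X_skew by blast
  have X': "X' t \<in> skew_mats n" by (rule skew_mats_deriv[OF X_skew X_deriv])
  have "tup n d (\<lambda>k. V t * (X' t * J k - J k * X' t) * (V t)\<^sup>T) \<in> flag_tangent (V t)"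
    by (rule commutator_in_flag_tangent[OF V X'])
  moreover note orth_proj_LXJ_JXL[OF V X L]
  moreover have "is_orth_proj n d (flag_tangent (V t))
      (tup n d (\<lambda>k. V t * ((V t)\<^sup>T * V' t * J k * X t + X t * J k * ((V t)\<^sup>T * V' t)) * (V t)\<^sup>T))
      (tup n d (\<lambda>k. 0\<^sub>m n n))"
    by (rule orth_proj_LJX_XJL[OF V]) (use X L X_diag Lam_diag in \<open>auto simp: skew_mats_def\<close>)
  ultimately show ?thesis unfolding Let_def by blast
qed

end
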